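(* Let $S=\{(x_i,y_i)\}_{i=1}^n$ with $0\le x_1<x_2<\dots<x_n$, and let $\hat f_S$ be the minimum-norm interpolating two-layer ReLU network for $S$ (defined in the context). Then: (i) $\hat f_S(x)=g_1(x)$ for $x\in(-\infty,x_2)$; (ii) $\hat f_S(x)=g_{n-1}(x)$ for $x\in[x_{n-1},\infty)$; (iii) for each $i\in\{2,\dots,n-2\}$ and $x\in[x_i,x_{i+1})$: if $\mathsf{curv}(x_i)=\mathsf{curv}(x_{i+1})=+1$ then $\max\{g_{i-1}(x),g_{i+1}(x)\}\le\hat f_S(x)\le g_i(x)$; if $\mathsf{curv}(x_i)=\mathsf{curv}(x_{i+1})=-1$ then $\min\{g_{i-1}(x),g_{i+1}(x)\}\ge\hat f_S(x)\ge g_i(x)$; otherwise (i.e. $\mathsf{curv}(x_i)=0$, or $\mathsf{curv}(x_{i+1})=0$, or $\mathsf{curv}(x_i)\ne\mathsf{curv}(x_{i+1})$) $\hat f_S(x)=g_i(x)$.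
   Context: A two-layer ReLU network with skip connection is $f_{\theta,a_0,b_0}(x)=\sum_{j=1}^m a_j(w_jx+b_j)_++a_0x+b_0$ with $\theta=\{a_j,w_j,b_j\}_{j=1}^m\in\mathbb{R}^{3m}$ and arbitrary width $m$. The min-norm interpolator $\hat f_S$ is the (unique) minimizer of $\|\theta\|_2^2$ over all $m,\theta,a_0,b_0$ subject to $f_{\theta,a_0,b_0}(x_i)=y_i$ for all $i\in[n]$ (the weights $a_0,b_0$ are not penalized). For $i\in[n-1]$, $g_i$ is the affine function through $(x_i,y_i)$ and $(x_{i+1},y_{i+1})$, and $\delta_i$ is its slope; set $\delta_0:=\delta_1$, $\delta_n:=\delta_{n-1}$. For $i\in[n]$, $\mathsf{curv}(x_i)=+1$ if $\delta_i>\delta_{i-1}$, $0$ if $\delta_i=\delta_{i-1}$, and $-1$ if $\delta_i<\delta_{i-1}$. *)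

theory Defs
  imports Complex_Main
begin

definition relu :: "real \<Rightarrow> real" where
  "relu z = max 0 z"

definition nn :: "nat \<Rightarrow> (nat \<Rightarrow> real) \<Rightarrow> (nat \<Rightarrow> real) \<Rightarrow> (nat \<Rightarrow> real) \<Rightarrow> real \<Rightarrow> real \<Rightarrow> real \<Rightarrow> real" where
  "nn m a w b a0 b0 t = (\<Sum>j<m. a j * relu (w j * t + b j)) + a0 * t + b0"

definition param_norm :: "nat \<Rightarrow> (nat \<Rightarrow> real) \<Rightarrow> (nat \<Rightarrow> real) \<Rightarrow> (nat \<Rightarrow> real) \<Rightarrow> real" where
  "param_norm m a w b = (\<Sum>j<m. (a j)\<^sup>2 + (w j)\<^sup>2 + (b j)\<^sup>2)"

definition interpolates :: "nat \<Rightarrow> (nat \<Rightarrow> real) \<Rightarrow> (nat \<Rightarrow> real) \<Rightarrow> nat \<Rightarrow> (nat \<Rightarrow> real) \<Rightarrow> (nat \<Rightarrow> real) \<Rightarrow> (nat \<Rightarrow> real) \<Rightarrow> real \<Rightarrow> real \<Rightarrow> bool" where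
  "interpolates n x y m a w b a0 b0 \<longleftrightarrow> (\<forall>i\<in>{1..n}. nn m a w b a0 b0 (x i) = y i)"

definition min_norm_interpolant :: "nat \<Rightarrow> (nat \<Rightarrow> real) \<Rightarrow> (nat \<Rightarrow> real) \<Rightarrow> (real \<Rightarrow> real) \<Rightarrow> bool" where
  "min_norm_interpolant n x y f \<longleftrightarrow>
     (\<exists>m a w b a0 b0. interpolates n x y m a w b a0 b0 \<and> f = nn m a w b a0 b0 \<and>
        (\<forall>m' a' w' b' a0' b0'. interpolates n x y m' a' w' b' a0' b0' \<longrightarrow>
              param_norm m a w b \<le> param_norm m' a' w' b'))"

definition slope :: "(nat \<Rightarrow> real) \<Rightarrow> (nat \<Rightarrow> real) \<Rightarrow> nat \<Rightarrow> real" where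
  "slope x y i = (y (i+1) - y i) / (x (i+1) - x i)"

definition gline :: "(nat \<Rightarrow> real) \<Rightarrow> (nat \<Rightarrow> real) \<Rightarrow> nat \<Rightarrow> real \<Rightarrow> real" where
  "gline x y i t = y i + slope x y i * (t - x i)"

definition delta :: "nat \<Rightarrow> (nat \<Rightarrow> real) \<Rightarrow> (nat \<Rightarrow> real) \<Rightarrow> nat \<Rightarrow> real" where
  "delta n x y i = (if i = 0 then slope x y 1 else if i = n then slope x y (n-1) else slope x y i)"

definition curv :: "nat \<Rightarrow> (nat \<Rightarrow> real) \<Rightarrow> (nat \<Rightarrow> real) \<Rightarrow> nat \<Rightarrow> int" where
  "curv n x y i = (if delta n x y i > delta n x y (i-1) then 1
                   else if delta n x y i = delta n x y (i-1) then 0 else -1)"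

end

theory Submission
  imports Defs
begin

text \<open>
  A neuron \<open>a (w t + b)\<^sub>+\<close> is, up to an affine function, a kink \<open>c (t - p)\<^sub>+\<close>, and its
  squared parameter norm is at least \<open>2 |c| sqrt (1 + p\<^sup>2)\<close>, with equality for a balanced
  neuron. Hence the min-norm interpolant is \<open>A + B t + \<Sum>\<^sub>j c\<^sub>j (t - p\<^sub>j)\<^sub>+\<close>, and replacing
  any sub-family of its kinks by two kinks that agree with it on the data up to an affine
  function never decreases the weighted variation \<open>\<Sum>\<^sub>j |c\<^sub>j| sqrt (1 + p\<^sub>j\<^sup>2)\<close>.

  This optimality is tested against dual certificates: functions \<open>\<phi>\<close> with
  \<open>|\<phi> z| \<le> sqrt (1 + z\<^sup>2)\<close> whose integral against the kinks equals the cost of a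
  replacement. They show that there is no kink left of \<open>x\<^sub>2\<close> or right of \<open>x\<^sub>n\<^sub>-\<^sub>1\<close>, that
  inside each cell \<open>[x\<^sub>i, x\<^sub>i\<^sub>+\<^sub>1]\<close> the kinks are either absent from the interior or
  concentrated at one interior point, and that concentrated kinks in adjacent cells have the same
  sign, since two kinks of opposite signs can be moved more cheaply towards the data points.
  On an inner cell the interpolant is therefore a function with a single kink whose one-sided
  slopes at \<open>x\<^sub>i\<close> and \<open>x\<^sub>i\<^sub>+\<^sub>1\<close> lie between the neighbouring secant slopes, which gives the
  sandwich bounds. The hypothesis \<open>0 \<le> x\<^sub>1\<close> enters through the monotonicity of
  \<open>sqrt (1 + z\<^sup>2)\<close> on \<open>[0, \<infinity>)\<close>.
\<close>

section \<open>The weight of a kink\<close>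

definition kink_weight :: "real \<Rightarrow> real" where
  "kink_weight r = sqrt (1 + r\<^sup>2)"

lemma kink_weight_pos: "0 < kink_weight r"
  unfolding kink_weight_def by (simp add: add_pos_nonneg)

lemma kink_weight_sq: "(kink_weight r)\<^sup>2 = 1 + r\<^sup>2"
  unfolding kink_weight_def by (simp add: add_nonneg_nonneg)

lemma kink_weight_mono: "0 \<le> u \<Longrightarrow> u \<le> z \<Longrightarrow> kink_weight u \<le> kink_weight z"
  unfolding kink_weight_def by (simp add: power_mono)

lemma abs_inner_le_kink_weight: "\<bar>1 + z * q\<bar> \<le> kink_weight z * kink_weight q"
proof -
  have "(1 + z * q)\<^sup>2 \<le> (1 + z\<^sup>2) * (1 + q\<^sup>2)"
    using zero_le_power2[of "z - q"] by (simp add: power2_eq_square algebra_simps)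
  then show ?thesis
    unfolding kink_weight_def by (metis real_sqrt_abs real_sqrt_le_mono real_sqrt_mult)
qed

lemma abs_inner_less_kink_weight:
  assumes "z \<noteq> q" shows "\<bar>1 + z * q\<bar> < kink_weight z * kink_weight q"
proof -
  have "0 < (z - q)\<^sup>2" using assms by simp
  then have "(1 + z * q)\<^sup>2 < (1 + z\<^sup>2) * (1 + q\<^sup>2)"
    by (simp add: power2_eq_square algebra_simps)
  then show ?thesis
    unfolding kink_weight_def by (metis real_sqrt_abs real_sqrt_less_mono real_sqrt_mult)
qed

lemma kink_weight_chord_less:
  assumes "0 \<le> u" "u \<le> z" "z < v"
  shows "kink_weight v * (z - u) < (v - u) * kink_weight z"
proof -
  have "(v - u)\<^sup>2 * (1 + z\<^sup>2) - (1 + v\<^sup>2) * (z - u)\<^sup>2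
      = (v - z) * ((v - u) + (z - u) + u * ((v - u) * z + v * (z - u)))"
    by (simp add: power2_eq_square algebra_simps)
  also have "\<dots> > 0"
    using assms by (intro mult_pos_pos add_pos_nonneg) auto
  finally have "(1 + v\<^sup>2) * (z - u)\<^sup>2 < (v - u)\<^sup>2 * (1 + z\<^sup>2)" by simp
  then have "sqrt ((1 + v\<^sup>2) * (z - u)\<^sup>2) < sqrt ((v - u)\<^sup>2 * (1 + z\<^sup>2))"
    by (rule real_sqrt_less_mono)
  with assms show ?thesis
    unfolding kink_weight_def by (simp add: real_sqrt_mult)
qed

lemma kink_weight_chord_le:
  "0 \<le> u \<Longrightarrow> u \<le> z \<Longrightarrow> z \<le> v \<Longrightarrow> kink_weight v * (z - u) \<le> (v - u) * kink_weight z"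
  using kink_weight_chord_less[of u z v] by (cases "z = v") auto

lemma abs_kink_weight_secant_le:
  assumes "0 \<le> u" "u \<le> z" "z \<le> v"
  shows "\<bar>kink_weight u * (v - z) - kink_weight v * (z - u)\<bar> \<le> (v - u) * kink_weight z"
proof -
  have "kink_weight u * (v - z) \<le> kink_weight z * (v - z)"
    using assms kink_weight_mono[of u z] by (simp add: mult_right_mono)
  moreover have "0 \<le> kink_weight u * (v - z)" "0 \<le> kink_weight v * (z - u)"
    using assms kink_weight_pos[of u] kink_weight_pos[of v] by auto
  moreover have "kink_weight z * (v - z) \<le> kink_weight z * (v - u)"
    using assms kink_weight_pos[of z] by simp
  ultimately show ?thesis
    using kink_weight_chord_le[OF assms] by (simp add: abs_le_iff algebra_simps)
qed

lemma abs_kink_weight_secant_less: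
  assumes "0 \<le> u" "u < z" "z < v"
  shows "\<bar>kink_weight u * (v - z) - kink_weight v * (z - u)\<bar> < (v - u) * kink_weight z"
proof -
  have "kink_weight u * (v - z) \<le> kink_weight z * (v - z)"
    using assms kink_weight_mono[of u z] by (simp add: mult_right_mono)
  moreover have "0 \<le> kink_weight u * (v - z)" "0 \<le> kink_weight v * (z - u)"
    using assms kink_weight_pos[of u] kink_weight_pos[of v] by auto
  moreover have "kink_weight z * (v - z) < kink_weight z * (v - u)"
    using assms kink_weight_pos[of z] by simp
  ultimately show ?thesis
    using kink_weight_chord_less[of u z v] assms by (simp add: abs_less_iff algebra_simps)
qed

section \<open>Neurons and kinks\<close>

lemma relu_scale: "0 \<le> s \<Longrightarrow> relu (s * z) = s * relu z"
  unfolding relu_def by (cases "0 \<le> z") (auto simp: mult_nonneg_nonpos)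

lemma relu_minus: "relu (- z) = relu z - z"
  unfolding relu_def by auto

lemma relu_nonneg: "0 \<le> relu z"
  unfolding relu_def by simp

lemma neuron_kink_form:
  fixes a w b :: real
  obtains c p \<alpha> \<beta> where "\<And>t. a * relu (w * t + b) = c * relu (t - p) + \<alpha> + \<beta> * t"
    and "2 * \<bar>c\<bar> * kink_weight p \<le> a\<^sup>2 + w\<^sup>2 + b\<^sup>2"
proof (cases "w = 0")
  case True
  then show ?thesis by (intro that[of 0 0 "a * relu b" 0]) auto
next
  case False
  define p where "p = - b / w"
  have lin: "w * t + b = w * (t - p)" for t
    using False unfolding p_def by (simp add: algebra_simps)
  have "w\<^sup>2 + b\<^sup>2 = (\<bar>w\<bar> * kink_weight p)\<^sup>2"
    using False kink_weight_sq[of p] unfolding p_def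
    by (simp add: power_mult_distrib power_divide field_simps)
  moreover have "2 * \<bar>a\<bar> * (\<bar>w\<bar> * kink_weight p) \<le> a\<^sup>2 + (\<bar>w\<bar> * kink_weight p)\<^sup>2"
    using zero_le_power2[of "\<bar>a\<bar> - \<bar>w\<bar> * kink_weight p"] by (simp add: power2_eq_square algebra_simps)
  ultimately have cost: "2 * \<bar>a * \<bar>w\<bar>\<bar> * kink_weight p \<le> a\<^sup>2 + w\<^sup>2 + b\<^sup>2"
    by (simp add: abs_mult mult.assoc)
  show ?thesis
  proof (cases "0 < w")
    case True
    then show ?thesis
      using cost by (intro that[of "a * \<bar>w\<bar>" p 0 0]) (simp_all add: lin relu_scale)
  next
    case False
    have rel: "relu (w * (t - p)) = - w * relu (t - p) + w * (t - p)" for t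
    proof -
      have "relu (w * (t - p)) = relu ((- w) * (- (t - p)))" by (simp add: algebra_simps)
      also have "\<dots> = - w * relu (- (t - p))"
        using False by (intro relu_scale) simp
      finally have "relu (w * (t - p)) = - w * relu (- (t - p))" .
      then show ?thesis unfolding relu_minus by (simp add: algebra_simps)
    qed
    have "a * relu (w * t + b) = a * \<bar>w\<bar> * relu (t - p) + - a * w * p + a * w * t" for t
      unfolding lin rel using False by (simp add: algebra_simps)
    then show ?thesis using cost by (rule that)
  qed
qed

lemma kink_neuron:
  fixes e r :: real
  obtains a w b where "\<And>t. a * relu (w * t + b) = e * relu (t - r)"
    and "a\<^sup>2 + w\<^sup>2 + b\<^sup>2 = 2 * \<bar>e\<bar> * kink_weight r"
proof (cases "e = 0")
  case True
  then show ?thesis by (intro that[of 0 0 0]) auto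
next
  case False
  define s where "s = sqrt (\<bar>e\<bar> / kink_weight r)"
  have s_pos: "0 < s" and s_sq: "s\<^sup>2 = \<bar>e\<bar> / kink_weight r"
    unfolding s_def using False kink_weight_pos[of r] by auto
  have "(e / s)\<^sup>2 = \<bar>e\<bar>\<^sup>2 / (\<bar>e\<bar> / kink_weight r)"
    by (simp add: power_divide s_sq)
  also have "\<dots> = \<bar>e\<bar> * kink_weight r"
    using False kink_weight_pos[of r] by (simp add: power2_eq_square field_simps)
  finally have "(e / s)\<^sup>2 = \<bar>e\<bar> * kink_weight r" .
  moreover have "s\<^sup>2 + (- s * r)\<^sup>2 = s\<^sup>2 * (kink_weight r)\<^sup>2"
    using kink_weight_sq[of r] by (simp add: power2_eq_square algebra_simps)
  then have "s\<^sup>2 + (- s * r)\<^sup>2 = \<bar>e\<bar> * kink_weight r"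
    using s_sq kink_weight_pos[of r] by (simp add: power2_eq_square)
  moreover have "e / s * relu (s * t + - s * r) = e * relu (t - r)" for t
    using relu_scale[of s "t - r"] s_pos by (simp add: algebra_simps)
  ultimately show ?thesis by (intro that[of "e / s" s "- s * r"]) auto
qed

lemma min_norm_exchange:
  assumes interp: "interpolates n x y m a w b a0 b0"
    and minimal: "\<And>m' a' w' b' a0' b0'. interpolates n x y m' a' w' b' a0' b0' \<Longrightarrow>
                    param_norm m a w b \<le> param_norm m' a' w' b'"
    and replace: "\<forall>r\<in>{1..n}. (\<Sum>j<m. if P j then a j * relu (w j * x r + b j) else 0)
                    = \<alpha> + \<beta> * x r + e1 * relu (x r - r1) + e2 * relu (x r - r2)"
  shows "(\<Sum>j<m. if P j then (a j)\<^sup>2 + (w j)\<^sup>2 + (b j)\<^sup>2 else 0)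
           \<le> 2 * \<bar>e1\<bar> * kink_weight r1 + 2 * \<bar>e2\<bar> * kink_weight r2"
proof -
  obtain a1 w1 b1 where k1: "\<And>t. a1 * relu (w1 * t + b1) = e1 * relu (t - r1)"
    and n1: "a1\<^sup>2 + w1\<^sup>2 + b1\<^sup>2 = 2 * \<bar>e1\<bar> * kink_weight r1"
    using kink_neuron[of e1 r1] by blast
  obtain a2 w2 b2 where k2: "\<And>t. a2 * relu (w2 * t + b2) = e2 * relu (t - r2)"
    and n2: "a2\<^sup>2 + w2\<^sup>2 + b2\<^sup>2 = 2 * \<bar>e2\<bar> * kink_weight r2"
    using kink_neuron[of e2 r2] by blast
  define swap :: "(nat \<Rightarrow> real) \<Rightarrow> real \<Rightarrow> real \<Rightarrow> nat \<Rightarrow> real" where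
    "swap h h1 h2 j = (if j < m then if P j then 0 else h j else if j = m then h1 else h2)" for h h1 h2 j
  let ?a = "swap a a1 a2" and ?w = "swap w w1 w2" and ?b = "swap b b1 b2"
  let ?out = "\<lambda>t. \<Sum>j<m. if P j then a j * relu (w j * t + b j) else 0"
  have "nn (Suc (Suc m)) ?a ?w ?b (a0 + \<beta>) (b0 + \<alpha>) t
      = nn m a w b a0 b0 t - ?out t + \<alpha> + \<beta> * t + e1 * relu (t - r1) + e2 * relu (t - r2)" for t
  proof -
    have "(\<Sum>j<m. ?a j * relu (?w j * t + ?b j)) = (\<Sum>j<m. a j * relu (w j * t + b j)) - ?out t"
      unfolding sum_subtractf[symmetric] by (rule sum.cong) (auto simp: swap_def)
    then show ?thesis
      unfolding nn_def by (simp add: swap_def k1 k2) (simp add: algebra_simps)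
  qed
  moreover have "nn m a w b a0 b0 (x r) = y r" if "r \<in> {1..n}" for r
    using interp that unfolding interpolates_def by blast
  ultimately have "interpolates n x y (Suc (Suc m)) ?a ?w ?b (a0 + \<beta>) (b0 + \<alpha>)"
    using replace unfolding interpolates_def by simp
  then have "param_norm m a w b \<le> param_norm (Suc (Suc m)) ?a ?w ?b"
    by (rule minimal)
  moreover have "param_norm m a w b = (\<Sum>j<m. if P j then (a j)\<^sup>2 + (w j)\<^sup>2 + (b j)\<^sup>2 else 0)
      + (\<Sum>j<m. if P j then 0 else (a j)\<^sup>2 + (w j)\<^sup>2 + (b j)\<^sup>2)"
    unfolding param_norm_def sum.distrib[symmetric] by (rule sum.cong) auto
  moreover have "param_norm (Suc (Suc m)) ?a ?w ?b = (\<Sum>j<m. if P j then 0 else (a j)\<^sup>2 + (w j)\<^sup>2 + (b j)\<^sup>2)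
      + 2 * \<bar>e1\<bar> * kink_weight r1 + 2 * \<bar>e2\<bar> * kink_weight r2"
  proof -
    have "(\<Sum>j<m. (?a j)\<^sup>2 + (?w j)\<^sup>2 + (?b j)\<^sup>2) = (\<Sum>j<m. if P j then 0 else (a j)\<^sup>2 + (w j)\<^sup>2 + (b j)\<^sup>2)"
      by (rule sum.cong) (auto simp: swap_def)
    then show ?thesis
      unfolding param_norm_def using n1 n2 by (simp add: swap_def)
  qed
  ultimately show ?thesis by linarith
qed

section \<open>Finite families of kinks\<close>

(* The kinks c j (t - p j)\<^sub>+ for j < m, seen as a finite signed measure with an atom of weight
   c j at p j; a predicate P on the indices selects a sub-family. *)
locale kink_network =
  fixes m :: nat and c p :: "nat \<Rightarrow> real"
begin

definition integral :: "(nat \<Rightarrow> bool) \<Rightarrow> (real \<Rightarrow> real) \<Rightarrow> real" where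
  "integral P \<phi> = (\<Sum>j<m. if P j then c j * \<phi> (p j) else 0)"

definition subnet :: "(nat \<Rightarrow> bool) \<Rightarrow> real \<Rightarrow> real" where
  "subnet P t = integral P (\<lambda>z. relu (t - z))"

definition mass :: "(nat \<Rightarrow> bool) \<Rightarrow> real" where
  "mass P = integral P (\<lambda>_. 1)"

definition moment :: "(nat \<Rightarrow> bool) \<Rightarrow> real" where
  "moment P = integral P (\<lambda>z. z)"

definition cost :: "(nat \<Rightarrow> bool) \<Rightarrow> real" where
  "cost P = (\<Sum>j<m. if P j then \<bar>c j\<bar> * kink_weight (p j) else 0)"

lemma integral_cong:
  "(\<And>j. j < m \<Longrightarrow> P j \<Longrightarrow> c j \<noteq> 0 \<Longrightarrow> \<phi> (p j) = \<psi> (p j)) \<Longrightarrow> integral P \<phi> = integral P \<psi>"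
  unfolding integral_def by (rule sum.cong) auto

lemma integral_cong_pred:
  assumes "\<And>j. j < m \<Longrightarrow> c j \<noteq> 0 \<Longrightarrow> (if P j then \<phi> (p j) else 0) = (if Q j then \<psi> (p j) else 0)"
  shows "integral P \<phi> = integral Q \<psi>"
proof -
  have "integral P \<phi> = (\<Sum>j<m. c j * (if P j then \<phi> (p j) else 0))"
    unfolding integral_def by (rule sum.cong) simp_all
  also have "\<dots> = (\<Sum>j<m. c j * (if Q j then \<psi> (p j) else 0))"
  proof (rule sum.cong)
    fix j assume "j \<in> {..<m}"
    then show "c j * (if P j then \<phi> (p j) else 0) = c j * (if Q j then \<psi> (p j) else 0)"
      using assms[of j] by (cases "c j = 0") simp_all
  qed simp
  also have "\<dots> = integral Q \<psi>"
    unfolding integral_def by (rule sum.cong) simp_all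
  finally show ?thesis .
qed

lemma integral_disjoint_union:
  "(\<And>j. j < m \<Longrightarrow> \<not> (P j \<and> Q j)) \<Longrightarrow> integral (\<lambda>j. P j \<or> Q j) \<phi> = integral P \<phi> + integral Q \<phi>"
  unfolding integral_def sum.distrib[symmetric] by (rule sum.cong) auto

lemma integral_linear:
  "integral P (\<lambda>z. \<alpha> * f z + \<beta> * g z) = \<alpha> * integral P f + \<beta> * integral P g"
  unfolding integral_def sum_distrib_left sum.distrib[symmetric] by (rule sum.cong) (auto simp: algebra_simps)

lemma integral_affine: "integral P (\<lambda>z. \<alpha> + \<beta> * z) = \<alpha> * mass P + \<beta> * moment P"
  using integral_linear[of P \<alpha> "\<lambda>_. 1" \<beta> "\<lambda>z. z"] unfolding mass_def moment_def by simp

lemma integral_const: "integral P (\<lambda>_. a) = a * mass P"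
  unfolding mass_def integral_def sum_distrib_left by (rule sum.cong) auto

lemma integral_concentrated:
  assumes "\<forall>j<m. P j \<and> c j \<noteq> 0 \<longrightarrow> p j = q" "\<forall>j<m. p j = q \<longrightarrow> P j"
  shows "integral P \<phi> = mass (\<lambda>j. p j = q) * \<phi> q"
proof -
  have "integral P \<phi> = integral (\<lambda>j. p j = q) (\<lambda>_. \<phi> q)"
    unfolding integral_def by (rule sum.cong) (use assms in auto)
  then show ?thesis by (simp add: integral_const)
qed

lemma integral_at: "integral (\<lambda>j. p j = q) \<phi> = mass (\<lambda>j. p j = q) * \<phi> q"
  by (rule integral_concentrated) auto

lemma subnet_eq_0: "\<forall>j<m. P j \<longrightarrow> t \<le> p j \<Longrightarrow> subnet P t = 0"
  unfolding subnet_def integral_def by (intro sum.neutral) (auto simp: relu_def)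

lemma subnet_eq_affine: "\<forall>j<m. P j \<longrightarrow> p j \<le> t \<Longrightarrow> subnet P t = t * mass P - moment P"
proof -
  assume "\<forall>j<m. P j \<longrightarrow> p j \<le> t"
  then have "subnet P t = integral P (\<lambda>z. t + (- 1) * z)"
    unfolding subnet_def by (intro integral_cong) (simp add: relu_def)
  then show ?thesis using integral_affine[of P t "- 1"] by simp
qed

lemma cost_mono: "(\<And>j. j < m \<Longrightarrow> Q j \<Longrightarrow> P j) \<Longrightarrow> cost Q \<le> cost P"
  unfolding cost_def by (intro sum_mono) (auto simp: less_imp_le[OF kink_weight_pos])

lemma cost_disjoint_union:
  "(\<And>j. j < m \<Longrightarrow> \<not> (P j \<and> Q j)) \<Longrightarrow> cost (\<lambda>j. P j \<or> Q j) = cost P + cost Q"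
  unfolding cost_def sum.distrib[symmetric] by (rule sum.cong) auto

lemma abs_mass_le_cost: "\<bar>mass (\<lambda>j. p j = q)\<bar> * kink_weight q \<le> cost (\<lambda>j. p j = q)"
proof -
  have "mass (\<lambda>j. p j = q) = (\<Sum>j<m. if p j = q then c j else 0)"
    unfolding mass_def integral_def by (simp only: mult_1_right)
  then have "\<bar>mass (\<lambda>j. p j = q)\<bar> \<le> (\<Sum>j<m. \<bar>if p j = q then c j else 0\<bar>)"
    using sum_abs by metis
  moreover have "cost (\<lambda>j. p j = q) = (\<Sum>j<m. \<bar>if p j = q then c j else 0\<bar>) * kink_weight q"
    unfolding cost_def sum_distrib_right by (rule sum.cong) auto
  ultimately show ?thesis
    using kink_weight_pos[of q] by (simp add: mult_right_mono)
qed

lemma certificate_vanishing: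
  assumes bound: "\<forall>j<m. P j \<longrightarrow> \<bar>\<phi> (p j)\<bar> \<le> kink_weight (p j)"
    and tight: "cost P \<le> integral P \<phi>"
    and j: "j < m" "P j" and strict: "\<bar>\<phi> (p j)\<bar> < kink_weight (p j)"
  shows "c j = 0"
proof (rule ccontr)
  assume "c j \<noteq> 0"
  define gap where "gap i = (if P i then \<bar>c i\<bar> * kink_weight (p i) - c i * \<phi> (p i) else 0)" for i
  have gap_nonneg: "0 \<le> gap i" if "i < m" for i
  proof -
    have "c i * \<phi> (p i) \<le> \<bar>c i\<bar> * \<bar>\<phi> (p i)\<bar>" by (simp add: abs_mult[symmetric])
    also have "\<dots> \<le> \<bar>c i\<bar> * kink_weight (p i)" if "P i"
      using bound \<open>i < m\<close> that by (simp add: mult_left_mono)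
    finally show ?thesis unfolding gap_def by auto
  qed
  have "(\<Sum>i<m. gap i) = cost P - integral P \<phi>"
    unfolding gap_def cost_def integral_def sum_subtractf[symmetric] by (rule sum.cong) auto
  then have "(\<Sum>i<m. gap i) = 0"
    using tight sum_nonneg[of "{..<m}" gap] gap_nonneg by force
  then have "gap j = 0"
    using sum_nonneg_eq_0_iff[of "{..<m}" gap] gap_nonneg j by auto
  moreover have "c j * \<phi> (p j) < \<bar>c j\<bar> * kink_weight (p j)"
  proof -
    have "c j * \<phi> (p j) \<le> \<bar>c j\<bar> * \<bar>\<phi> (p j)\<bar>" by (simp add: abs_mult[symmetric])
    also have "\<dots> < \<bar>c j\<bar> * kink_weight (p j)" using strict \<open>c j \<noteq> 0\<close> by simp
    finally show ?thesis .
  qed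
  ultimately show False unfolding gap_def using j by simp
qed

lemma single_kink_certificate:
  assumes cost: "cost P \<le> \<bar>e\<bar> * kink_weight r"
    and integral: "integral P \<psi> = e * \<psi> r" and pos: "0 < \<psi> r"
    and bound: "\<forall>j<m. P j \<longrightarrow> kink_weight r * \<bar>\<psi> (p j)\<bar> \<le> \<psi> r * kink_weight (p j)"
    and j: "j < m" "P j" and strict: "kink_weight r * \<bar>\<psi> (p j)\<bar> < \<psi> r * kink_weight (p j)"
  shows "c j = 0"
proof -
  define \<phi> where "\<phi> z = sgn e * kink_weight r / \<psi> r * \<psi> z" for z
  have "integral P \<phi> = sgn e * kink_weight r / \<psi> r * integral P \<psi>"
    unfolding \<phi>_def using integral_linear[of P "sgn e * kink_weight r / \<psi> r" \<psi> 0 \<psi>] by simp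
  also have "\<dots> = \<bar>e\<bar> * kink_weight r"
    unfolding integral using pos by (simp add: abs_sgn)
  finally have tight: "cost P \<le> integral P \<phi>" using cost by simp
  have abs_\<phi>: "\<bar>\<phi> z\<bar> \<le> kink_weight z \<longleftrightarrow> kink_weight r * \<bar>\<psi> z\<bar> \<le> \<psi> r * kink_weight z"
    "\<bar>\<phi> z\<bar> < kink_weight z \<longleftrightarrow> kink_weight r * \<bar>\<psi> z\<bar> < \<psi> r * kink_weight z"
    if "e \<noteq> 0" for z
    unfolding \<phi>_def using that pos kink_weight_pos[of r]
    by (simp_all add: abs_mult abs_sgn_eq divide_le_eq divide_less_eq mult.commute)
  show "c j = 0"
  proof (cases "e = 0")
    case True
    then have "cost P \<le> 0" using cost by simp
    then show ?thesis
      using certificate_vanishing[of P "\<lambda>_. 0" j] j kink_weight_pos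
      by (simp add: integral_const less_imp_le[OF kink_weight_pos])
  next
    case False
    then show ?thesis
      using certificate_vanishing[OF _ tight j] bound strict abs_\<phi> by simp
  qed
qed

end

lemma min_norm_interpolant_interpolates:
  "min_norm_interpolant n x y f \<Longrightarrow> r \<in> {1..n} \<Longrightarrow> f (x r) = y r"
  unfolding min_norm_interpolant_def interpolates_def by blast

lemma min_norm_interpolant_kink_form:
  assumes "min_norm_interpolant n x y f"
  obtains A B m c p where "\<And>t. f t = A + B * t + kink_network.subnet m c p (\<lambda>_. True) t"
    and "\<And>P \<alpha> \<beta> e1 r1 e2 r2.
           \<forall>r\<in>{1..n}. kink_network.subnet m c p P (x r)
                        = \<alpha> + \<beta> * x r + e1 * relu (x r - r1) + e2 * relu (x r - r2) \<Longrightarrow>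
           kink_network.cost m c p P \<le> \<bar>e1\<bar> * kink_weight r1 + \<bar>e2\<bar> * kink_weight r2"
proof -
  from assms obtain m a w b a0 b0 where interp: "interpolates n x y m a w b a0 b0"
    and f: "f = nn m a w b a0 b0"
    and minimal: "\<And>m' a' w' b' a0' b0'. interpolates n x y m' a' w' b' a0' b0' \<Longrightarrow>
                    param_norm m a w b \<le> param_norm m' a' w' b'"
    unfolding min_norm_interpolant_def by blast
  have "\<forall>j. \<exists>c p \<alpha> \<beta>. (\<forall>t. a j * relu (w j * t + b j) = c * relu (t - p) + \<alpha> + \<beta> * t)
              \<and> 2 * \<bar>c\<bar> * kink_weight p \<le> (a j)\<^sup>2 + (w j)\<^sup>2 + (b j)\<^sup>2"
    by (metis neuron_kink_form)
  then obtain c p \<alpha> \<beta> where neuron: "\<And>j t. a j * relu (w j * t + b j) = c j * relu (t - p j) + \<alpha> j + \<beta> j * t"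
    and neuron_cost: "\<And>j. 2 * \<bar>c j\<bar> * kink_weight (p j) \<le> (a j)\<^sup>2 + (w j)\<^sup>2 + (b j)\<^sup>2"
    by metis
  interpret kink_network m c p .
  have split: "(\<Sum>j<m. if P j then a j * relu (w j * t + b j) else 0)
      = subnet P t + (\<Sum>j<m. if P j then \<alpha> j else 0) + (\<Sum>j<m. if P j then \<beta> j else 0) * t" for P t
    unfolding subnet_def integral_def sum_distrib_right sum.distrib[symmetric] by (rule sum.cong) (auto simp: neuron)
  show thesis
  proof
    show "f t = b0 + (\<Sum>j<m. \<alpha> j) + (a0 + (\<Sum>j<m. \<beta> j)) * t + subnet (\<lambda>_. True) t" for t
      using split[of "\<lambda>_. True" t] unfolding f nn_def by (simp add: algebra_simps)
  next
    fix P \<alpha>' \<beta>' e1 r1 e2 r2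
    assume "\<forall>r\<in>{1..n}. subnet P (x r) = \<alpha>' + \<beta>' * x r + e1 * relu (x r - r1) + e2 * relu (x r - r2)"
    then have "(\<Sum>j<m. if P j then (a j)\<^sup>2 + (w j)\<^sup>2 + (b j)\<^sup>2 else 0)
        \<le> 2 * \<bar>e1\<bar> * kink_weight r1 + 2 * \<bar>e2\<bar> * kink_weight r2"
      by (intro min_norm_exchange[OF interp minimal, where P = P
            and \<alpha> = "\<alpha>' + (\<Sum>j<m. if P j then \<alpha> j else 0)" and \<beta> = "\<beta>' + (\<Sum>j<m. if P j then \<beta> j else 0)"])
         (auto simp: split algebra_simps)
    moreover have "2 * cost P \<le> (\<Sum>j<m. if P j then (a j)\<^sup>2 + (w j)\<^sup>2 + (b j)\<^sup>2 else 0)"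
      unfolding cost_def sum_distrib_left using neuron_cost by (intro sum_mono) (auto simp: mult.assoc)
    ultimately show "cost P \<le> \<bar>e1\<bar> * kink_weight r1 + \<bar>e2\<bar> * kink_weight r2" by linarith
  qed
qed

section \<open>Replacing two kinks of opposite signs\<close>

lemma two_kink_cost_less_by_certificate:
  assumes \<phi>: "\<And>z. \<phi> z = \<alpha> + \<beta> * z + \<gamma> * relu (b - z)"
    and "e1 + e2 = C1 + C2" "e1 * r1 + e2 * r2 = C1 * q1 + C2 * q2"
    and "e1 * relu (b - r1) + e2 * relu (b - r2) = C1 * relu (b - q1) + C2 * relu (b - q2)"
    and "e1 * \<phi> r1 = \<bar>e1\<bar> * kink_weight r1" "e2 * \<phi> r2 = \<bar>e2\<bar> * kink_weight r2"
    and "C1 * \<phi> q1 < \<bar>C1\<bar> * kink_weight q1" "C2 * \<phi> q2 \<le> \<bar>C2\<bar> * kink_weight q2"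
  shows "\<bar>e1\<bar> * kink_weight r1 + \<bar>e2\<bar> * kink_weight r2 < \<bar>C1\<bar> * kink_weight q1 + \<bar>C2\<bar> * kink_weight q2"
proof -
  have "e1 * \<phi> r1 + e2 * \<phi> r2
      = \<alpha> * (e1 + e2) + \<beta> * (e1 * r1 + e2 * r2) + \<gamma> * (e1 * relu (b - r1) + e2 * relu (b - r2))"
    unfolding \<phi> by (simp add: algebra_simps)
  also have "\<dots> = C1 * \<phi> q1 + C2 * \<phi> q2"
    unfolding \<phi> assms(2-4) by (simp add: algebra_simps)
  finally show ?thesis using assms(5-8) by linarith
qed

lemma left_end_certificate:
  assumes "0 \<le> a" "a < q" "q < b" "b < r"
    and \<mu>: "\<mu> * (b - a) = kink_weight a + (1 + a * r) / kink_weight r"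
    and \<phi>: "\<And>z. \<phi> z = \<mu> * relu (b - z) - (1 + z * r) / kink_weight r"
  shows "\<phi> a = kink_weight a" "\<phi> r = - kink_weight r" "\<phi> q < kink_weight q"
    and "\<And>z. b \<le> z \<Longrightarrow> - kink_weight z \<le> \<phi> z"
proof -
  have W_r: "0 < kink_weight r" "(1 + r * r) / kink_weight r = kink_weight r"
    using kink_weight_pos[of r] kink_weight_sq[of r] by (auto simp: power2_eq_square field_simps)
  show "\<phi> a = kink_weight a"
    unfolding \<phi> using \<mu> assms by (simp add: relu_def)
  show "\<phi> r = - kink_weight r"
    unfolding \<phi> using assms W_r by (simp add: relu_def)
  define \<theta> where "\<theta> = (b - q) / (b - a)"
  have \<theta>: "0 < \<theta>" "\<theta> < 1" unfolding \<theta>_def using assms by auto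
  have "\<mu> = (kink_weight a + (1 + a * r) / kink_weight r) / (b - a)"
    using \<mu> assms by (simp add: eq_divide_eq)
  then have "\<mu> * (b - q) = \<theta> * (kink_weight a + (1 + a * r) / kink_weight r)"
    unfolding \<theta>_def by simp
  then have "\<phi> q = \<theta> * kink_weight a + \<theta> * (1 + a * r) / kink_weight r - (1 + q * r) / kink_weight r"
    unfolding \<phi> using assms by (simp add: relu_def algebra_simps)
  moreover have "\<theta> * (1 + a * r) / kink_weight r < (1 + q * r) / kink_weight r"
  proof -
    have "0 < 1 + a * r" "a * r \<le> q * r"
      using assms by (auto intro: add_pos_nonneg mult_right_mono)
    moreover have "\<theta> * (1 + a * r) < 1 + a * r"
      using \<theta> \<open>0 < 1 + a * r\<close> by simp
    ultimately have "\<theta> * (1 + a * r) < 1 + q * r" by linarith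
    then show ?thesis using W_r by (simp add: divide_strict_right_mono)
  qed
  moreover have "\<theta> * kink_weight a \<le> kink_weight a"
    using \<theta> kink_weight_pos[of a] by simp
  moreover have "kink_weight a \<le> kink_weight q"
    using kink_weight_mono[of a q] assms by simp
  ultimately show "\<phi> q < kink_weight q" by linarith
  show "- kink_weight z \<le> \<phi> z" if "b \<le> z" for z
  proof -
    have "(1 + z * r) / kink_weight r \<le> kink_weight z"
      using abs_inner_le_kink_weight[of z r] W_r by (simp add: divide_le_eq)
    then show ?thesis unfolding \<phi> using that by (simp add: relu_def)
  qed
qed

lemma right_end_certificate:
  assumes "0 \<le> r" "r < q" "q < b" "b < d"
    and \<mu>: "\<mu> * (d - b) = - (kink_weight d + (1 + d * r) / kink_weight r)"
    and \<phi>: "\<And>z. \<phi> z = (1 + z * r) / kink_weight r + \<mu> * relu (z - b)"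
  shows "\<phi> r = kink_weight r" "\<phi> d = - kink_weight d" "\<phi> q < kink_weight q"
    and "\<And>z. b \<le> z \<Longrightarrow> z \<le> d \<Longrightarrow> - kink_weight z \<le> \<phi> z"
proof -
  have W_r: "0 < kink_weight r" "(1 + r * r) / kink_weight r = kink_weight r"
    using kink_weight_pos[of r] kink_weight_sq[of r] by (auto simp: power2_eq_square field_simps)
  show "\<phi> r = kink_weight r"
    unfolding \<phi> using assms W_r by (simp add: relu_def)
  show "\<phi> d = - kink_weight d"
    unfolding \<phi> using \<mu> assms by (simp add: relu_def)
  have "1 + q * r < kink_weight q * kink_weight r"
    using abs_inner_less_kink_weight[of q r] assms by simp
  then show "\<phi> q < kink_weight q"
    unfolding \<phi> using assms W_r by (simp add: relu_def divide_less_eq)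
  show "- kink_weight z \<le> \<phi> z" if z: "b \<le> z" "z \<le> d" for z
  proof -
    define \<theta> where "\<theta> = (z - b) / (d - b)"
    have \<theta>: "0 \<le> \<theta>" "\<theta> \<le> 1" "\<theta> * (d - b) = z - b" unfolding \<theta>_def using assms z by auto
    define X where "X = kink_weight d + (1 + d * r) / kink_weight r"
    have "\<mu> = - X / (d - b)"
      using \<mu> assms unfolding X_def[symmetric] by (simp add: field_simps)
    then have "\<mu> * (z - b) = - (\<theta> * X)"
      unfolding \<theta>_def by simp
    then have "\<mu> * (z - b) = - (\<theta> * (kink_weight d + (1 + d * r) / kink_weight r))"
      unfolding X_def .
    then have "\<phi> z = (1 + z * r) / kink_weight r - \<theta> * (1 + d * r) / kink_weight r - \<theta> * kink_weight d"
      unfolding \<phi> using z by (simp add: relu_def algebra_simps)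
    moreover have "\<theta> * (1 + d * r) / kink_weight r \<le> (1 + z * r) / kink_weight r"
    proof -
      have "\<theta> * d = z - (1 - \<theta>) * b" using \<theta>(3) by (simp add: algebra_simps)
      moreover have "0 \<le> (1 - \<theta>) * b" using \<theta> assms by simp
      ultimately have "\<theta> * d * r \<le> z * r" using assms by (simp add: mult_right_mono)
      then have "\<theta> * (1 + d * r) \<le> 1 + z * r" using \<theta> by (simp add: algebra_simps)
      then show ?thesis using W_r by (simp add: divide_right_mono)
    qed
    moreover have "\<theta> * kink_weight d \<le> kink_weight z"
    proof -
      have "kink_weight d * (z - b) \<le> (d - b) * kink_weight z"
        using kink_weight_chord_le[of b z d] assms z by simp
      then show ?thesis unfolding \<theta>_def using assms by (simp add: field_simps)
    qed
    ultimately show ?thesis by linarith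
  qed
qed

lemma two_kink_move_left:
  assumes "0 \<le> a" "a < q1" "q1 < b" "b < q2" "q2 < d" "0 < C1" "C2 < 0"
    and far: "C1 * (q1 - a) * (d - b) \<le> - C2 * (d - q2) * (b - a)"
  obtains e1 e2 r2 where "b < r2" "r2 \<le> d"
    "e1 + e2 = C1 + C2" "e1 * a + e2 * r2 = C1 * q1 + C2 * q2"
    "e1 * relu (b - a) + e2 * relu (b - r2) = C1 * relu (b - q1) + C2 * relu (b - q2)"
    "\<bar>e1\<bar> * kink_weight a + \<bar>e2\<bar> * kink_weight r2 < \<bar>C1\<bar> * kink_weight q1 + \<bar>C2\<bar> * kink_weight q2"
proof -
  define e1 where "e1 = C1 * (b - q1) / (b - a)"
  define e2 where "e2 = C2 + C1 * (q1 - a) / (b - a)"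
  define r2 where "r2 = b + C2 * (q2 - b) / e2"
  have ba: "0 < b - a" and db: "0 < d - b" using assms by auto
  have e1_pos: "0 < e1" unfolding e1_def using assms by simp
  have e1e: "e1 * (b - a) = C1 * (b - q1)" unfolding e1_def using ba by simp
  have "e1 + e2 = C2 + (C1 * (b - q1) + C1 * (q1 - a)) / (b - a)"
    unfolding e1_def e2_def by (simp add: add_divide_distrib)
  also have "C1 * (b - q1) + C1 * (q1 - a) = C1 * (b - a)"
    by (simp add: algebra_simps)
  finally have mass: "e1 + e2 = C1 + C2" using ba by simp
  have "C1 * (q1 - a) / (b - a) \<le> - C2 * (d - q2) / (d - b)"
    using far ba db by (simp add: field_simps)
  also have "\<dots> < - C2"
    using assms db by (simp add: field_simps)
  finally have e2_neg: "e2 < 0" unfolding e2_def by simp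
  have r2e: "(r2 - b) * e2 = C2 * (q2 - b)"
    unfolding r2_def using e2_neg by simp
  have "b < r2"
    unfolding r2_def using assms e2_neg by (simp add: divide_neg_neg mult_neg_pos)
  have "(d - b) * e2 \<le> (r2 - b) * e2"
    using far ba db unfolding r2e unfolding e2_def by (simp add: field_simps)
  then have "r2 \<le> d"
    using e2_neg by (simp add: mult_le_cancel_right)
  have moment: "e1 * a + e2 * r2 = C1 * q1 + C2 * q2"
  proof -
    have "e1 * a + e2 * r2 = (e1 + e2) * b - e1 * (b - a) + (r2 - b) * e2"
      by (simp add: algebra_simps)
    then show ?thesis
      unfolding r2e mass e1e by (simp add: algebra_simps)
  qed
  have at_b: "e1 * relu (b - a) + e2 * relu (b - r2) = C1 * relu (b - q1) + C2 * relu (b - q2)"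
    using assms \<open>b < r2\<close> e1e by (simp add: relu_def)
  define \<mu> where "\<mu> = (kink_weight a + (1 + a * r2) / kink_weight r2) / (b - a)"
  define \<phi> where "\<phi> z = \<mu> * relu (b - z) - (1 + z * r2) / kink_weight r2" for z
  have "\<mu> * (b - a) = kink_weight a + (1 + a * r2) / kink_weight r2"
    unfolding \<mu>_def using ba by simp
  note cert = left_end_certificate[OF \<open>0 \<le> a\<close> \<open>a < q1\<close> \<open>q1 < b\<close> \<open>b < r2\<close> this \<phi>_def]
  have "\<bar>e1\<bar> * kink_weight a + \<bar>e2\<bar> * kink_weight r2 < \<bar>C1\<bar> * kink_weight q1 + \<bar>C2\<bar> * kink_weight q2"
  proof (rule two_kink_cost_less_by_certificate[OF _ mass moment at_b])
    show "\<phi> z = - 1 / kink_weight r2 + (- r2 / kink_weight r2) * z + \<mu> * relu (b - z)" for z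
      unfolding \<phi>_def by (simp add: add_divide_distrib algebra_simps)
    show "e1 * \<phi> a = \<bar>e1\<bar> * kink_weight a" "e2 * \<phi> r2 = \<bar>e2\<bar> * kink_weight r2"
      using cert(1,2) e1_pos e2_neg by auto
    show "C1 * \<phi> q1 < \<bar>C1\<bar> * kink_weight q1"
      using cert(3) assms by simp
    show "C2 * \<phi> q2 \<le> \<bar>C2\<bar> * kink_weight q2"
      using mult_left_mono_neg[OF cert(4), of q2 C2] assms by simp
  qed
  with \<open>b < r2\<close> \<open>r2 \<le> d\<close> mass moment at_b show ?thesis by (rule that)
qed

lemma two_kink_move_right:
  assumes "0 \<le> a" "a < q1" "q1 < b" "b < q2" "q2 < d" "0 < C1" "C2 < 0"
    and near: "- C2 * (d - q2) * (b - a) < C1 * (q1 - a) * (d - b)"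
  obtains e1 r1 e2 where "a \<le> r1" "r1 < q1"
    "e1 + e2 = C1 + C2" "e1 * r1 + e2 * d = C1 * q1 + C2 * q2"
    "e1 * relu (b - r1) + e2 * relu (b - d) = C1 * relu (b - q1) + C2 * relu (b - q2)"
    "\<bar>e1\<bar> * kink_weight r1 + \<bar>e2\<bar> * kink_weight d < \<bar>C1\<bar> * kink_weight q1 + \<bar>C2\<bar> * kink_weight q2"
proof -
  define e2 where "e2 = C2 * (q2 - b) / (d - b)"
  define e1 where "e1 = C1 + C2 * (d - q2) / (d - b)"
  define r1 where "r1 = b - C1 * (b - q1) / e1"
  have ba: "0 < b - a" and db: "0 < d - b" using assms by auto
  have e2_neg: "e2 < 0" unfolding e2_def using assms by (simp add: mult_neg_pos divide_neg_pos)
  have e2e: "e2 * (d - b) = C2 * (q2 - b)" unfolding e2_def using db by simp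
  have "e1 + e2 = C1 + (C2 * (d - q2) + C2 * (q2 - b)) / (d - b)"
    unfolding e1_def e2_def by (simp add: add_divide_distrib)
  also have "C2 * (d - q2) + C2 * (q2 - b) = C2 * (d - b)"
    by (simp add: algebra_simps)
  finally have mass: "e1 + e2 = C1 + C2" using db by simp
  have K2: "0 < - C2 * (d - q2) / (d - b)" using assms by (simp add: mult_neg_pos divide_neg_pos)
  have "- C2 * (d - q2) / (d - b) < C1 * (q1 - a) / (b - a)"
    using near ba db by (simp add: field_simps)
  also have "\<dots> < C1" using assms by (simp add: field_simps)
  finally have e1_pos: "0 < e1" unfolding e1_def by simp
  have r1e: "(b - r1) * e1 = C1 * (b - q1)"
    unfolding r1_def using e1_pos by simp
  have "e1 < C1" using K2 unfolding e1_def by simp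
  then have "(b - q1) * e1 < (b - r1) * e1" unfolding r1e using assms by simp
  then have "r1 < q1" using e1_pos by simp
  have "(b - r1) * e1 \<le> (b - a) * e1"
    using near ba db unfolding r1e unfolding e1_def by (simp add: field_simps)
  then have "a \<le> r1" using e1_pos by simp
  have moment: "e1 * r1 + e2 * d = C1 * q1 + C2 * q2"
  proof -
    have "e1 * r1 + e2 * d = (e1 + e2) * b - (b - r1) * e1 + e2 * (d - b)"
      by (simp add: algebra_simps)
    then show ?thesis
      unfolding r1e mass e2e by (simp add: algebra_simps)
  qed
  have at_b: "e1 * relu (b - r1) + e2 * relu (b - d) = C1 * relu (b - q1) + C2 * relu (b - q2)"
    using assms \<open>r1 < q1\<close> r1e by (simp add: relu_def algebra_simps)
  define \<mu> where "\<mu> = - (kink_weight d + (1 + d * r1) / kink_weight r1) / (d - b)"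
  define \<phi> where "\<phi> z = (1 + z * r1) / kink_weight r1 + \<mu> * relu (z - b)" for z
  have "\<mu> * (d - b) = - (kink_weight d + (1 + d * r1) / kink_weight r1)"
    unfolding \<mu>_def using db by simp
  note cert = right_end_certificate[OF _ \<open>r1 < q1\<close> \<open>q1 < b\<close> _ this \<phi>_def]
  have "0 \<le> r1" "b < d" using \<open>a \<le> r1\<close> assms by simp_all
  note b_d = \<open>b < d\<close>
  have "\<bar>e1\<bar> * kink_weight r1 + \<bar>e2\<bar> * kink_weight d < \<bar>C1\<bar> * kink_weight q1 + \<bar>C2\<bar> * kink_weight q2"
  proof (rule two_kink_cost_less_by_certificate[OF _ mass moment at_b])
    show "\<phi> z = (1 / kink_weight r1 - \<mu> * b) + (r1 / kink_weight r1 + \<mu>) * z + \<mu> * relu (b - z)" for z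
    proof -
      have "\<mu> * relu (z - b) = \<mu> * relu (b - z) + \<mu> * (z - b)"
        unfolding relu_def by (simp add: max_def algebra_simps)
      then show ?thesis unfolding \<phi>_def by (simp add: add_divide_distrib algebra_simps)
    qed
    show "e1 * \<phi> r1 = \<bar>e1\<bar> * kink_weight r1" "e2 * \<phi> d = \<bar>e2\<bar> * kink_weight d"
      using cert(1,2)[OF \<open>0 \<le> r1\<close> b_d] e1_pos e2_neg by auto
    show "C1 * \<phi> q1 < \<bar>C1\<bar> * kink_weight q1"
      using cert(3)[OF \<open>0 \<le> r1\<close> b_d] assms by simp
    show "C2 * \<phi> q2 \<le> \<bar>C2\<bar> * kink_weight q2"
      using mult_left_mono_neg[OF cert(4)[OF \<open>0 \<le> r1\<close> b_d], of q2 C2] assms by simp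
  qed
  with \<open>a \<le> r1\<close> \<open>r1 < q1\<close> mass moment at_b show ?thesis by (rule that)
qed

lemma two_kink_replacement:
  assumes "0 \<le> a" "a < q1" "q1 < b" "b < q2" "q2 < d" "C1 * C2 < 0"
  obtains e1 r1 e2 r2 where "a \<le> r1" "r1 \<le> d" "a \<le> r2" "r2 \<le> d"
    "e1 + e2 = C1 + C2" "e1 * r1 + e2 * r2 = C1 * q1 + C2 * q2"
    "e1 * relu (b - r1) + e2 * relu (b - r2) = C1 * relu (b - q1) + C2 * relu (b - q2)"
    "\<bar>e1\<bar> * kink_weight r1 + \<bar>e2\<bar> * kink_weight r2 < \<bar>C1\<bar> * kink_weight q1 + \<bar>C2\<bar> * kink_weight q2"
proof -
  let ?replaces = "\<lambda>C1 C2 e1 r1 e2 r2. a \<le> r1 \<and> r1 \<le> d \<and> a \<le> r2 \<and> r2 \<le> d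
    \<and> e1 + e2 = C1 + C2 \<and> e1 * r1 + e2 * r2 = C1 * q1 + C2 * q2
    \<and> e1 * relu (b - r1) + e2 * relu (b - r2) = C1 * relu (b - q1) + C2 * relu (b - q2)
    \<and> \<bar>e1\<bar> * kink_weight r1 + \<bar>e2\<bar> * kink_weight r2 < \<bar>C1\<bar> * kink_weight q1 + \<bar>C2\<bar> * kink_weight q2"
  have pos: "\<exists>e1 r1 e2 r2. ?replaces C1 C2 e1 r1 e2 r2" if signs: "0 < C1" "C2 < 0" for C1 C2
  proof (cases "C1 * (q1 - a) * (d - b) \<le> - C2 * (d - q2) * (b - a)")
    case True
    obtain e1 e2 r2 where "b < r2" "r2 \<le> d" "e1 + e2 = C1 + C2" "e1 * a + e2 * r2 = C1 * q1 + C2 * q2"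
      "e1 * relu (b - a) + e2 * relu (b - r2) = C1 * relu (b - q1) + C2 * relu (b - q2)"
      "\<bar>e1\<bar> * kink_weight a + \<bar>e2\<bar> * kink_weight r2 < \<bar>C1\<bar> * kink_weight q1 + \<bar>C2\<bar> * kink_weight q2"
      by (rule two_kink_move_left[OF assms(1-5) signs True])
    with assms have "?replaces C1 C2 e1 a e2 r2" by auto
    then show ?thesis by blast
  next
    case False
    obtain e1 r1 e2 where "a \<le> r1" "r1 < q1" "e1 + e2 = C1 + C2" "e1 * r1 + e2 * d = C1 * q1 + C2 * q2"
      "e1 * relu (b - r1) + e2 * relu (b - d) = C1 * relu (b - q1) + C2 * relu (b - q2)"
      "\<bar>e1\<bar> * kink_weight r1 + \<bar>e2\<bar> * kink_weight d < \<bar>C1\<bar> * kink_weight q1 + \<bar>C2\<bar> * kink_weight q2"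
      by (rule two_kink_move_right[OF assms(1-5) signs]) (use False in auto)
    with assms have "?replaces C1 C2 e1 r1 e2 d" by auto
    then show ?thesis by blast
  qed
  have "\<exists>e1 r1 e2 r2. ?replaces C1 C2 e1 r1 e2 r2"
  proof (cases "0 < C1")
    case True
    with assms show ?thesis by (intro pos) (auto simp: mult_less_0_iff)
  next
    case False
    with assms have "0 < - C1" "- C2 < 0" by (auto simp: mult_less_0_iff)
    from pos[OF this] obtain e1 r1 e2 r2 where "?replaces (- C1) (- C2) e1 r1 e2 r2" by blast
    then have "?replaces C1 C2 (- e1) r1 (- e2) r2" by (auto simp: algebra_simps)
    then show ?thesis by blast
  qed
  with that show thesis by blast
qed

section \<open>A single kink between two secants\<close>

lemma one_kink_convex_bounds:
  fixes a C d0 d1 d2 u v q t :: real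
  assumes "u < q" "q < v" "u \<le> t" "t \<le> v" "0 \<le> C"
    and secant: "d1 * (v - u) = a * (v - u) + C * (v - q)"
    and "d0 \<le> a" "a + C \<le> d2"
  shows "d0 * (t - u) \<le> a * (t - u) + C * relu (t - q)"
    and "d1 * (v - u) + d2 * (t - v) \<le> a * (t - u) + C * relu (t - q)"
    and "a * (t - u) + C * relu (t - q) \<le> d1 * (t - u)"
proof -
  show "d0 * (t - u) \<le> a * (t - u) + C * relu (t - q)"
    using assms mult_right_mono[of d0 a "t - u"] mult_nonneg_nonneg[OF _ relu_nonneg, of C "t - q"]
    by simp
  have "a * (t - u) + C * (t - q) = (a + C) * (t - v) + d1 * (v - u)"
    using secant by (simp add: algebra_simps)
  moreover have "d2 * (t - v) \<le> (a + C) * (t - v)"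
    using assms by (simp add: mult_right_mono_neg)
  moreover have "C * (t - q) \<le> C * relu (t - q)"
    using assms by (simp add: relu_def mult_left_mono)
  ultimately show "d1 * (v - u) + d2 * (t - v) \<le> a * (t - u) + C * relu (t - q)"
    by linarith
  have "relu (t - q) * (v - u) \<le> (t - u) * (v - q)"
  proof (cases "t \<le> q")
    case True
    then show ?thesis using assms by (simp add: relu_def)
  next
    case False
    have "(t - u) * (v - q) - (t - q) * (v - u) = (q - u) * (v - t)"
      by (simp add: algebra_simps)
    moreover have "0 \<le> (q - u) * (v - t)" using assms by simp
    ultimately show ?thesis using False by (simp add: relu_def)
  qed
  then have "C * (relu (t - q) * (v - u)) \<le> C * ((t - u) * (v - q))"
    using assms by (simp add: mult_left_mono)
  then have "(a * (t - u) + C * relu (t - q)) * (v - u) \<le> (a * (v - u) + C * (v - q)) * (t - u)"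
    by (simp add: algebra_simps)
  also have "\<dots> = d1 * (t - u) * (v - u)"
    unfolding secant[symmetric] by (simp add: ac_simps)
  finally show "a * (t - u) + C * relu (t - q) \<le> d1 * (t - u)"
    using assms by (simp add: mult_le_cancel_right)
qed

lemma one_kink_convex:
  fixes a C d0 d1 d2 u v q :: real
  assumes "u < q" "q < v" "0 < C"
    and secant: "d1 * (v - u) = a * (v - u) + C * (v - q)"
    and "a \<in> {min d0 d1..max d0 d1}" "a + C \<in> {min d1 d2..max d1 d2}"
  shows "d0 < d1 \<and> d1 < d2"
proof -
  have "(d1 - a) * (v - u) = C * (v - q)" "(a + C - d1) * (v - u) = C * (q - u)"
    using secant by (simp_all add: algebra_simps)
  moreover have "0 < C * (v - q)" "0 < C * (q - u)" "0 < v - u"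
    using assms by auto
  ultimately have "a < d1" "d1 < a + C"
    by (metis diff_gt_0_iff_gt zero_less_mult_pos2)+
  with assms show ?thesis by auto
qed

lemma one_kink_between_secants:
  fixes u v q t a C d0 d1 d2 :: real
  assumes uqv: "u < q" "q < v" and t: "u \<le> t" "t \<le> v"
    and secant: "d1 * (v - u) = a * (v - u) + C * (v - q)"
    and a: "a \<in> {min d0 d1..max d0 d1}" and aC: "a + C \<in> {min d1 d2..max d1 d2}"
  defines "h \<equiv> a * (t - u) + C * relu (t - q)"
  shows "d0 < d1 \<Longrightarrow> d1 < d2 \<Longrightarrow> max (d0 * (t - u)) (d1 * (v - u) + d2 * (t - v)) \<le> h \<and> h \<le> d1 * (t - u)"
    and "d1 < d0 \<Longrightarrow> d2 < d1 \<Longrightarrow> min (d0 * (t - u)) (d1 * (v - u) + d2 * (t - v)) \<ge> h \<and> h \<ge> d1 * (t - u)"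
    and "\<not> (d0 < d1 \<and> d1 < d2) \<Longrightarrow> \<not> (d1 < d0 \<and> d2 < d1) \<Longrightarrow> h = d1 * (t - u)"
proof -
  have neg_secant: "- d1 * (v - u) = - a * (v - u) + - C * (v - q)"
    using secant by simp
  have convex: "d0 < d1 \<and> d1 < d2" if "0 < C"
    using one_kink_convex[OF uqv that secant a aC] .
  have neg_a: "- a \<in> {min (- d0) (- d1)..max (- d0) (- d1)}"
    and neg_aC: "- a + - C \<in> {min (- d1) (- d2)..max (- d1) (- d2)}"
    using a aC by auto
  have concave: "d1 < d0 \<and> d2 < d1" if "C < 0"
    using one_kink_convex[OF uqv _ neg_secant neg_a neg_aC] that by simp
  show "max (d0 * (t - u)) (d1 * (v - u) + d2 * (t - v)) \<le> h \<and> h \<le> d1 * (t - u)"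
    if "d0 < d1" "d1 < d2"
  proof -
    have "0 \<le> C" using concave that by (cases "C < 0") auto
    moreover have "d0 \<le> a" "a + C \<le> d2" using a aC that by auto
    ultimately show ?thesis
      unfolding h_def using one_kink_convex_bounds[OF uqv t _ secant] by simp
  qed
  show "min (d0 * (t - u)) (d1 * (v - u) + d2 * (t - v)) \<ge> h \<and> h \<ge> d1 * (t - u)"
    if "d1 < d0" "d2 < d1"
  proof -
    have "0 \<le> - C" using convex that by (cases "0 < C") auto
    moreover have "- d0 \<le> - a" "- a + - C \<le> - d2" using a aC that by auto
    ultimately show ?thesis
      unfolding h_def using one_kink_convex_bounds[OF uqv t _ neg_secant, of "- d0" "- d2"] by simp
  qed
  show "h = d1 * (t - u)" if "\<not> (d0 < d1 \<and> d1 < d2)" "\<not> (d1 < d0 \<and> d2 < d1)"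
  proof -
    have "C = 0" using convex concave that by (cases C rule: linorder_cases) auto
    with secant uqv have "a = d1" by simp
    with \<open>C = 0\<close> show ?thesis unfolding h_def by simp
  qed
qed

section \<open>Optimal kink networks\<close>

lemma curv_inner:
  assumes "2 \<le> i" "i < n"
  shows "curv n x y i = (if slope x y (i - 1) < slope x y i then 1
                         else if slope x y (i - 1) = slope x y i then 0 else - 1)"
  using assms unfolding curv_def delta_def by auto

lemma barycenter_between:
  fixes u v M Mo :: real
  assumes uv: "u < v" and shares: "0 < (v * M - Mo) * (Mo - u * M)"
  shows "M \<noteq> 0" "u < Mo / M" "Mo / M < v"
proof -
  define U V where "U = v * M - Mo" and "V = Mo - u * M"
  have "(v - u) * (U * M) = U * U + U * V" "(v - u) * (V * M) = V * V + U * V"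
    unfolding U_def V_def by (simp_all add: algebra_simps)
  moreover have "0 < U * U + U * V" "0 < V * V + U * V"
    using shares unfolding U_def[symmetric] V_def[symmetric] by (simp_all add: add_nonneg_pos)
  ultimately have same_sign: "0 < U * M" "0 < V * M"
    using uv by (metis diff_gt_0_iff_gt zero_less_mult_pos)+
  then show "M \<noteq> 0" by auto
  then have "Mo / M - u = V / M" "v - Mo / M = U / M"
    unfolding U_def V_def by (simp_all add: field_simps)
  moreover have "0 < V / M" "0 < U / M"
    using same_sign by (simp_all add: zero_less_divide_iff zero_less_mult_iff)
  ultimately show "u < Mo / M" "Mo / M < v" by simp_all
qed

(* The exchange property is the only consequence of norm minimality used below. *)
locale optimal_kink_network = kink_network m c p
  for m :: nat and c p :: "nat \<Rightarrow> real" +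
  fixes n :: nat and x y :: "nat \<Rightarrow> real" and A B :: real
  assumes two_le_n: "2 \<le> n"
    and x1_nonneg: "0 \<le> x 1"
    and x_less: "\<And>i. 1 \<le> i \<Longrightarrow> i < n \<Longrightarrow> x i < x (i + 1)"
    and interpolation: "\<And>r. 1 \<le> r \<Longrightarrow> r \<le> n \<Longrightarrow> A + B * x r + subnet (\<lambda>_. True) (x r) = y r"
    and exchange: "\<And>P \<alpha> \<beta> e1 r1 e2 r2.
           \<forall>r\<in>{1..n}. subnet P (x r) = \<alpha> + \<beta> * x r + e1 * relu (x r - r1) + e2 * relu (x r - r2) \<Longrightarrow>
           cost P \<le> \<bar>e1\<bar> * kink_weight r1 + \<bar>e2\<bar> * kink_weight r2"
begin

definition net :: "real \<Rightarrow> real" where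
  "net t = A + B * t + subnet (\<lambda>_. True) t"

definition slope_right :: "real \<Rightarrow> real" where
  "slope_right u = B + mass (\<lambda>j. p j \<le> u)"

definition slope_left :: "real \<Rightarrow> real" where
  "slope_left u = B + mass (\<lambda>j. p j < u)"

definition in_cell :: "nat \<Rightarrow> nat \<Rightarrow> bool" where
  "in_cell k j \<longleftrightarrow> x k \<le> p j \<and> p j \<le> x (k + 1)"

lemma x_mono:
  assumes "1 \<le> i" "i \<le> j" "j \<le> n" shows "x i \<le> x j"
  using assms(2,3)
proof (induction j rule: dec_induct)
  case (step j)
  then show ?case using x_less[of j] assms(1) by simp
qed simp

lemma x_nonneg: "1 \<le> i \<Longrightarrow> i \<le> n \<Longrightarrow> 0 \<le> x i"
  using x_mono[of 1 i] x1_nonneg by simp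

lemma net_data: "1 \<le> r \<Longrightarrow> r \<le> n \<Longrightarrow> net (x r) = y r"
  unfolding net_def by (rule interpolation)

lemma net_shift:
  assumes "u \<le> t"
  shows "net t = net u + slope_right u * (t - u) + subnet (\<lambda>j. u < p j) t"
proof -
  have "subnet (\<lambda>_. True) t = subnet (\<lambda>_. True) u + (t - u) * mass (\<lambda>j. p j \<le> u) + subnet (\<lambda>j. u < p j) t"
    unfolding subnet_def mass_def integral_def sum_distrib_left sum.distrib[symmetric]
    by (rule sum.cong) (use assms in \<open>auto simp: relu_def algebra_simps\<close>)
  then show ?thesis unfolding net_def slope_right_def by (simp add: algebra_simps)
qed

lemma exchange_in_cell:
  assumes k: "1 \<le> k" "k < n" and P: "\<forall>j<m. P j \<longrightarrow> in_cell k j"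
    and r: "x k \<le> r1" "r1 \<le> x (k + 1)" "x k \<le> r2" "r2 \<le> x (k + 1)"
    and "mass P = e1 + e2" "moment P = e1 * r1 + e2 * r2"
  shows "cost P \<le> \<bar>e1\<bar> * kink_weight r1 + \<bar>e2\<bar> * kink_weight r2"
proof (rule exchange[where \<alpha> = 0 and \<beta> = 0], intro ballI)
  fix i assume i: "i \<in> {1..n}"
  show "subnet P (x i) = 0 + 0 * x i + e1 * relu (x i - r1) + e2 * relu (x i - r2)"
  proof (cases "i \<le> k")
    case True
    then have "x i \<le> x k" using x_mono i k by auto
    then show ?thesis
      using P r by (subst subnet_eq_0) (auto simp: in_cell_def relu_def)
  next
    case False
    then have "x (k + 1) \<le> x i" using x_mono i k by auto
    then show ?thesis
      using P r assms(8,9) by (subst subnet_eq_affine) (auto simp: in_cell_def relu_def algebra_simps)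
  qed
qed

(* The kinks of the cell are traded for two kinks at its ends with the same mass and moment; when
   these have opposite signs, the certificate interpolates linearly between the kink weight at one
   end and its negative at the other. *)
lemma cell_no_interior_kink:
  assumes k: "1 \<le> k" "k < n"
    and shares: "(x (k + 1) * mass (in_cell k) - moment (in_cell k))
                  * (moment (in_cell k) - x k * mass (in_cell k)) \<le> 0"
    and j: "j < m" "x k < p j" "p j < x (k + 1)"
  shows "c j = 0"
proof -
  define u v where "u = x k" and "v = x (k + 1)"
  define L where "L = v - u"
  define U where "U = v * mass (in_cell k) - moment (in_cell k)"
  define V where "V = moment (in_cell k) - u * mass (in_cell k)"
  define \<sigma> :: real where "\<sigma> = (if 0 \<le> U \<and> V \<le> 0 then 1 else - 1)"
  define \<phi> where "\<phi> z = \<sigma> / L * (kink_weight u * (v - z) - kink_weight v * (z - u))" for z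
  have uv: "0 \<le> u" "u < v" unfolding u_def v_def using x_nonneg x_less k by auto
  then have L: "0 < L" unfolding L_def by simp
  have "U + V = L * mass (in_cell k)" "U * u + V * v = L * moment (in_cell k)"
    unfolding U_def V_def L_def by (simp_all add: algebra_simps)
  then have "mass (in_cell k) = U / L + V / L" "moment (in_cell k) = U / L * u + V / L * v"
    using L by (simp_all add: field_simps)
  then have "cost (in_cell k) \<le> \<bar>U / L\<bar> * kink_weight u + \<bar>V / L\<bar> * kink_weight v"
    by (intro exchange_in_cell[OF k]) (use uv in \<open>auto simp: in_cell_def u_def v_def\<close>)
  also have "\<dots> = \<sigma> / L * (kink_weight u * U - kink_weight v * V)"
    using shares L unfolding \<sigma>_def U_def[symmetric] V_def[symmetric] u_def[symmetric] v_def[symmetric]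
    by (auto simp: mult_le_0_iff abs_of_nonneg abs_of_nonpos field_simps)
  also have "\<dots> = integral (in_cell k) \<phi>"
    unfolding \<phi>_def U_def V_def
    using integral_affine[of "in_cell k" "\<sigma> / L * (kink_weight u * v + kink_weight v * u)"
        "- \<sigma> / L * (kink_weight u + kink_weight v)"]
    by (simp add: algebra_simps)
  finally have tight: "cost (in_cell k) \<le> integral (in_cell k) \<phi>" .
  have abs_\<phi>: "\<bar>\<phi> z\<bar> = \<bar>kink_weight u * (v - z) - kink_weight v * (z - u)\<bar> / (v - u)" for z
    unfolding \<phi>_def \<sigma>_def L_def using uv by (simp add: abs_mult)
  show ?thesis
  proof (rule certificate_vanishing[OF _ tight j(1)])
    show "\<forall>i<m. in_cell k i \<longrightarrow> \<bar>\<phi> (p i)\<bar> \<le> kink_weight (p i)"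
      using abs_kink_weight_secant_le uv unfolding abs_\<phi> in_cell_def u_def v_def
      by (auto simp: divide_le_eq mult.commute)
    show "in_cell k j" using j unfolding in_cell_def by simp
    show "\<bar>\<phi> (p j)\<bar> < kink_weight (p j)"
      using abs_kink_weight_secant_less[of u "p j" v] uv j unfolding abs_\<phi> u_def v_def
      by (simp add: divide_less_eq mult.commute)
  qed
qed

(* Otherwise the kinks of the cell are traded for one kink at their barycentre q, and the
   certificate (1 + q z) / kink_weight q pins every kink of the cell to q. *)
lemma cell_concentrated:
  assumes k: "1 \<le> k" "k < n"
    and shares: "0 < (x (k + 1) * mass (in_cell k) - moment (in_cell k))
                      * (moment (in_cell k) - x k * mass (in_cell k))"
  obtains q where "x k < q" "q < x (k + 1)" "\<forall>j<m. in_cell k j \<and> c j \<noteq> 0 \<longrightarrow> p j = q"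
proof -
  define u v where "u = x k" and "v = x (k + 1)"
  define M where "M = mass (in_cell k)"
  define q where "q = moment (in_cell k) / M"
  have uv: "u < v" unfolding u_def v_def using x_less k by auto
  have "M \<noteq> 0" and q: "u < q" "q < v"
    using barycenter_between[OF uv] shares unfolding q_def M_def u_def v_def by auto
  have moment: "moment (in_cell k) = M * q"
    unfolding q_def using \<open>M \<noteq> 0\<close> by simp
  then have "cost (in_cell k) \<le> \<bar>M\<bar> * kink_weight q + \<bar>0\<bar> * kink_weight q"
    by (intro exchange_in_cell[OF k]) (use q in \<open>auto simp: in_cell_def u_def v_def M_def\<close>)
  then have cost: "cost (in_cell k) \<le> \<bar>M\<bar> * kink_weight q" by simp
  have integral: "integral (in_cell k) (\<lambda>z. 1 + q * z) = M * (1 + q * q)"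
    unfolding integral_affine moment M_def[symmetric] by (simp add: algebra_simps)
  have Wq: "1 + q * q = kink_weight q * kink_weight q" "0 < kink_weight q"
    using kink_weight_sq[of q] kink_weight_pos[of q] by (simp_all add: power2_eq_square)
  have bound: "kink_weight q * \<bar>1 + q * z\<bar> \<le> (1 + q * q) * kink_weight z"
    and strict: "z \<noteq> q \<Longrightarrow> kink_weight q * \<bar>1 + q * z\<bar> < (1 + q * q) * kink_weight z" for z
  proof -
    have "kink_weight q * \<bar>1 + q * z\<bar> \<le> kink_weight q * (kink_weight z * kink_weight q)"
      using abs_inner_le_kink_weight[of z q, unfolded mult.commute[of z q]] Wq(2) by simp
    then show "kink_weight q * \<bar>1 + q * z\<bar> \<le> (1 + q * q) * kink_weight z"
      unfolding Wq(1) by (simp only: ac_simps)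
    assume "z \<noteq> q"
    have "kink_weight q * \<bar>1 + q * z\<bar> < kink_weight q * (kink_weight z * kink_weight q)"
      using abs_inner_less_kink_weight[OF \<open>z \<noteq> q\<close>, unfolded mult.commute[of z q]] Wq(2) by simp
    then show "kink_weight q * \<bar>1 + q * z\<bar> < (1 + q * q) * kink_weight z"
      unfolding Wq(1) by (simp only: ac_simps)
  qed
  have "p j = q" if j: "j < m" "in_cell k j" "c j \<noteq> 0" for j
  proof (rule ccontr)
    assume "p j \<noteq> q"
    have "c j = 0"
    proof (rule single_kink_certificate[OF cost integral _ _ j(1,2)])
      show "0 < 1 + q * q" by (simp add: add_pos_nonneg)
      show "\<forall>i<m. in_cell k i \<longrightarrow> kink_weight q * \<bar>1 + q * p i\<bar> \<le> (1 + q * q) * kink_weight (p i)"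
        using bound by simp
      show "kink_weight q * \<bar>1 + q * p j\<bar> < (1 + q * q) * kink_weight (p j)"
        using strict \<open>p j \<noteq> q\<close> .
    qed
    with j show False by simp
  qed
  with q show ?thesis unfolding u_def v_def by (intro that) auto
qed

lemma cell_cases:
  assumes k: "1 \<le> k" "k < n"
  obtains (flat) "\<forall>j<m. x k < p j \<and> p j < x (k + 1) \<longrightarrow> c j = 0"
    | (kink) q where "x k < q" "q < x (k + 1)" "\<forall>j<m. in_cell k j \<and> c j \<noteq> 0 \<longrightarrow> p j = q"
        "mass (\<lambda>j. p j = q) \<noteq> 0"
proof (cases "(x (k + 1) * mass (in_cell k) - moment (in_cell k))
               * (moment (in_cell k) - x k * mass (in_cell k)) \<le> 0")
  case True
  show ?thesis
    by (intro flat allI impI cell_no_interior_kink[OF k True]) auto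
next
  case False
  then have "0 < (x (k + 1) * mass (in_cell k) - moment (in_cell k))
               * (moment (in_cell k) - x k * mass (in_cell k))" by simp
  then obtain q where q: "x k < q" "q < x (k + 1)" "\<forall>j<m. in_cell k j \<and> c j \<noteq> 0 \<longrightarrow> p j = q"
    by (rule cell_concentrated[OF k])
  have "x (k + 1) * mass (in_cell k) - moment (in_cell k)
      = integral (in_cell k) (\<lambda>z. x (k + 1) + (- 1) * z)"
    unfolding integral_affine by simp
  also have "\<dots> = mass (\<lambda>j. p j = q) * (x (k + 1) + (- 1) * q)"
  proof (rule integral_concentrated[OF q(3)])
    show "\<forall>j<m. p j = q \<longrightarrow> in_cell k j" using q(1,2) by (simp add: in_cell_def)
  qed
  finally have share: "x (k + 1) * mass (in_cell k) - moment (in_cell k)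
      = mass (\<lambda>j. p j = q) * (x (k + 1) + (- 1) * q)" .
  have "mass (\<lambda>j. p j = q) \<noteq> 0"
  proof
    assume "mass (\<lambda>j. p j = q) = 0"
    with share False show False by simp
  qed
  with q show ?thesis by (rule kink)
qed

lemma flat_cell:
  assumes k: "1 \<le> k" "k < n" and flat: "\<forall>j<m. x k < p j \<and> p j < x (k + 1) \<longrightarrow> c j = 0"
  shows "slope_right (x k) = slope x y k" "slope_left (x (k + 1)) = slope x y k"
    and "\<And>t. x k \<le> t \<Longrightarrow> t \<le> x (k + 1) \<Longrightarrow> net t = gline x y k t"
proof -
  have x_k: "x k < x (k + 1)" using x_less k by simp
  have on_cell: "net t = y k + slope_right (x k) * (t - x k)" if t: "x k \<le> t" "t \<le> x (k + 1)" for t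
  proof -
    have "subnet (\<lambda>j. x k < p j) t = integral (\<lambda>_. False) (\<lambda>_. 0)"
      unfolding subnet_def by (rule integral_cong_pred) (use flat t in \<open>auto simp: relu_def\<close>)
    then have "subnet (\<lambda>j. x k < p j) t = 0" by (simp add: integral_def)
    then show ?thesis using net_shift[OF t(1)] net_data[of k] k by simp
  qed
  have "y (k + 1) = y k + slope_right (x k) * (x (k + 1) - x k)"
    using on_cell[of "x (k + 1)"] net_data[of "k + 1"] x_k k by simp
  then show sr: "slope_right (x k) = slope x y k"
    unfolding slope_def using x_k by (simp add: field_simps)
  then show "net t = gline x y k t" if "x k \<le> t" "t \<le> x (k + 1)" for t
    using on_cell[OF that] unfolding gline_def by simp
  have "mass (\<lambda>j. p j < x (k + 1)) = mass (\<lambda>j. p j \<le> x k)"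
    unfolding mass_def by (rule integral_cong_pred) (use flat x_k in auto)
  then show "slope_left (x (k + 1)) = slope x y k"
    using sr unfolding slope_left_def slope_right_def by simp
qed

lemma kink_cell:
  assumes k: "1 \<le> k" "k < n" and q: "x k < q" "q < x (k + 1)"
    and conc: "\<forall>j<m. in_cell k j \<and> c j \<noteq> 0 \<longrightarrow> p j = q"
  shows "slope_left (x k) = slope_right (x k)"
    and "slope_right (x (k + 1)) = slope_left (x (k + 1))"
    and "slope_left (x (k + 1)) = slope_right (x k) + mass (\<lambda>j. p j = q)"
    and "\<And>t. x k \<le> t \<Longrightarrow> t \<le> x (k + 1) \<Longrightarrow>
           net t = y k + slope_right (x k) * (t - x k) + mass (\<lambda>j. p j = q) * relu (t - q)"
    and "slope x y k * (x (k + 1) - x k)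
           = slope_right (x k) * (x (k + 1) - x k) + mass (\<lambda>j. p j = q) * (x (k + 1) - q)"
proof -
  have x_k: "x k < x (k + 1)" using x_less k by simp
  have cong: "integral P \<phi> = integral Q \<psi>"
    if "\<And>j. p j < x k \<or> p j = q \<or> x (k + 1) < p j \<Longrightarrow>
          (if P j then \<phi> (p j) else 0) = (if Q j then \<psi> (p j) else 0)" for P Q \<phi> \<psi>
  proof (rule integral_cong_pred)
    fix j assume j: "j < m" "c j \<noteq> 0"
    have "p j < x k \<or> p j = q \<or> x (k + 1) < p j"
    proof (cases "in_cell k j")
      case True
      with conc j show ?thesis by blast
    next
      case False
      then show ?thesis unfolding in_cell_def by auto
    qed
    then show "(if P j then \<phi> (p j) else 0) = (if Q j then \<psi> (p j) else 0)" by (rule that)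
  qed
  have "mass (\<lambda>j. p j < x k) = mass (\<lambda>j. p j \<le> x k)"
    unfolding mass_def by (rule cong) (use q in auto)
  then show "slope_left (x k) = slope_right (x k)"
    unfolding slope_left_def slope_right_def by simp
  have "mass (\<lambda>j. p j \<le> x (k + 1)) = mass (\<lambda>j. p j < x (k + 1))"
    unfolding mass_def by (rule cong) (use q in auto)
  then show "slope_right (x (k + 1)) = slope_left (x (k + 1))"
    unfolding slope_left_def slope_right_def by simp
  have "mass (\<lambda>j. p j < x (k + 1)) = mass (\<lambda>j. p j \<le> x k \<or> p j = q)"
    unfolding mass_def by (rule cong) (use q x_k in auto)
  also have "\<dots> = mass (\<lambda>j. p j \<le> x k) + mass (\<lambda>j. p j = q)"
    unfolding mass_def by (rule integral_disjoint_union) (use q in auto)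
  finally show "slope_left (x (k + 1)) = slope_right (x k) + mass (\<lambda>j. p j = q)"
    unfolding slope_left_def slope_right_def by simp
  have on_cell: "net t = y k + slope_right (x k) * (t - x k) + mass (\<lambda>j. p j = q) * relu (t - q)"
    if t: "x k \<le> t" "t \<le> x (k + 1)" for t
  proof -
    have "subnet (\<lambda>j. x k < p j) t = integral (\<lambda>j. p j = q) (\<lambda>z. relu (t - z))"
      unfolding subnet_def by (rule cong) (use q t in \<open>auto simp: relu_def\<close>)
    also have "\<dots> = mass (\<lambda>j. p j = q) * relu (t - q)"
      by (rule integral_at)
    finally show ?thesis using net_shift[OF t(1)] net_data[of k] k by simp
  qed
  then show "\<And>t. x k \<le> t \<Longrightarrow> t \<le> x (k + 1) \<Longrightarrow>
      net t = y k + slope_right (x k) * (t - x k) + mass (\<lambda>j. p j = q) * relu (t - q)" .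
  have "y (k + 1) - y k = slope_right (x k) * (x (k + 1) - x k) + mass (\<lambda>j. p j = q) * (x (k + 1) - q)"
    using on_cell[of "x (k + 1)"] net_data[of "k + 1"] x_k q k by (simp add: relu_def)
  then show "slope x y k * (x (k + 1) - x k)
      = slope_right (x k) * (x (k + 1) - x k) + mass (\<lambda>j. p j = q) * (x (k + 1) - q)"
    unfolding slope_def using x_k by simp
qed

lemma subnet_adjacent_kink_cells:
  assumes q1: "x k < q1" "q1 < x (k + 1)" "\<forall>j<m. in_cell k j \<and> c j \<noteq> 0 \<longrightarrow> p j = q1"
    and q2: "x (k + 1) < q2" "q2 < x (k + 2)" "\<forall>j<m. in_cell (k + 1) j \<and> c j \<noteq> 0 \<longrightarrow> p j = q2"
  shows "subnet (\<lambda>j. x k \<le> p j \<and> p j \<le> x (k + 2)) t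
           = mass (\<lambda>j. p j = q1) * relu (t - q1) + mass (\<lambda>j. p j = q2) * relu (t - q2)"
proof -
  have q12: "x k < q1" "q1 < q2" "q2 < x (k + 2)" using q1 q2 by auto
  have iff: "x k \<le> p j \<and> p j \<le> x (k + 2) \<longleftrightarrow> p j = q1 \<or> p j = q2" if j: "j < m" "c j \<noteq> 0" for j
  proof
    assume P: "x k \<le> p j \<and> p j \<le> x (k + 2)"
    show "p j = q1 \<or> p j = q2"
    proof (cases "p j \<le> x (k + 1)")
      case True
      with P have "in_cell k j" unfolding in_cell_def by simp
      with q1(3) j show ?thesis by blast
    next
      case False
      with P have "in_cell (k + 1) j" unfolding in_cell_def by simp
      with q2(3) j show ?thesis by blast
    qed
  next
    assume "p j = q1 \<or> p j = q2"
    then show "x k \<le> p j \<and> p j \<le> x (k + 2)" using q12 by auto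
  qed
  have "subnet (\<lambda>j. x k \<le> p j \<and> p j \<le> x (k + 2)) t
      = integral (\<lambda>j. p j = q1 \<or> p j = q2) (\<lambda>z. relu (t - z))"
    unfolding subnet_def
  proof (rule integral_cong_pred)
    fix j assume "j < m" "c j \<noteq> 0"
    show "(if x k \<le> p j \<and> p j \<le> x (k + 2) then relu (t - p j) else 0)
        = (if p j = q1 \<or> p j = q2 then relu (t - p j) else 0)"
      unfolding iff[OF \<open>j < m\<close> \<open>c j \<noteq> 0\<close>] ..
  qed
  also have "\<dots> = integral (\<lambda>j. p j = q1) (\<lambda>z. relu (t - z)) + integral (\<lambda>j. p j = q2) (\<lambda>z. relu (t - z))"
    by (rule integral_disjoint_union) (use q12 in auto)
  finally show ?thesis unfolding integral_at .
qed

lemma adjacent_kinks_same_sign: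
  assumes k: "1 \<le> k" "k + 2 \<le> n"
    and q1: "x k < q1" "q1 < x (k + 1)" "\<forall>j<m. in_cell k j \<and> c j \<noteq> 0 \<longrightarrow> p j = q1"
    and q2: "x (k + 1) < q2" "q2 < x (k + 2)" "\<forall>j<m. in_cell (k + 1) j \<and> c j \<noteq> 0 \<longrightarrow> p j = q2"
  shows "0 \<le> mass (\<lambda>j. p j = q1) * mass (\<lambda>j. p j = q2)"
proof (rule ccontr)
  define C1 C2 where "C1 = mass (\<lambda>j. p j = q1)" and "C2 = mass (\<lambda>j. p j = q2)"
  define P where "P j \<longleftrightarrow> x k \<le> p j \<and> p j \<le> x (k + 2)" for j
  have q12: "x k < q1" "q1 < q2" "q2 < x (k + 2)" using q1 q2 by auto
  assume "\<not> 0 \<le> mass (\<lambda>j. p j = q1) * mass (\<lambda>j. p j = q2)"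
  then have opposite: "C1 * C2 < 0" unfolding C1_def C2_def by simp
  have "0 \<le> x k" using x_nonneg k by simp
  then obtain e1 r1 e2 r2 where r: "x k \<le> r1" "r1 \<le> x (k + 2)" "x k \<le> r2" "r2 \<le> x (k + 2)"
    and mass: "e1 + e2 = C1 + C2" and moment: "e1 * r1 + e2 * r2 = C1 * q1 + C2 * q2"
    and at_b: "e1 * relu (x (k + 1) - r1) + e2 * relu (x (k + 1) - r2)
               = C1 * relu (x (k + 1) - q1) + C2 * relu (x (k + 1) - q2)"
    and cheaper: "\<bar>e1\<bar> * kink_weight r1 + \<bar>e2\<bar> * kink_weight r2
                  < \<bar>C1\<bar> * kink_weight q1 + \<bar>C2\<bar> * kink_weight q2"
    by (rule two_kink_replacement[OF _ q1(1,2) q2(1,2) opposite])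
  have two_kinks: "subnet P t = C1 * relu (t - q1) + C2 * relu (t - q2)" for t
    unfolding P_def C1_def C2_def by (rule subnet_adjacent_kink_cells[OF q1 q2])
  have "cost P \<le> \<bar>e1\<bar> * kink_weight r1 + \<bar>e2\<bar> * kink_weight r2"
  proof (rule exchange[where \<alpha> = 0 and \<beta> = 0], intro ballI)
    fix i assume i: "i \<in> {1..n}"
    consider "i \<le> k" | "i = k + 1" | "k + 2 \<le> i" by linarith
    then show "subnet P (x i) = 0 + 0 * x i + e1 * relu (x i - r1) + e2 * relu (x i - r2)"
    proof cases
      case 1
      then have "x i \<le> x k" using x_mono i k by auto
      then show ?thesis unfolding two_kinks using q1 q2 r by (simp add: relu_def)
    next
      case 2
      then show ?thesis unfolding two_kinks using at_b by simp
    next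
      case 3
      then have "x (k + 2) \<le> x i" using x_mono i k by auto
      then have "e1 * relu (x i - r1) + e2 * relu (x i - r2) = (e1 + e2) * x i - (e1 * r1 + e2 * r2)"
        "C1 * relu (x i - q1) + C2 * relu (x i - q2) = (C1 + C2) * x i - (C1 * q1 + C2 * q2)"
        using q1 q2 r by (simp_all add: relu_def algebra_simps)
      then show ?thesis unfolding two_kinks mass moment by simp
    qed
  qed
  also note cheaper
  also have "\<bar>C1\<bar> * kink_weight q1 + \<bar>C2\<bar> * kink_weight q2 \<le> cost (\<lambda>j. p j = q1) + cost (\<lambda>j. p j = q2)"
    unfolding C1_def C2_def by (intro add_mono abs_mass_le_cost)
  also have "\<dots> = cost (\<lambda>j. p j = q1 \<or> p j = q2)"
    using q12 by (intro cost_disjoint_union[symmetric]) auto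
  also have "\<dots> \<le> cost P"
    using q12 unfolding P_def by (intro cost_mono) auto
  finally show False by simp
qed

lemma one_sided_slopes_between:
  assumes k: "1 \<le> k" "k + 2 \<le> n"
  defines "I \<equiv> {min (slope x y k) (slope x y (k + 1))..max (slope x y k) (slope x y (k + 1))}"
  shows "slope_left (x (k + 1)) \<in> I" "slope_right (x (k + 1)) \<in> I"
proof -
  have k0: "1 \<le> k" "k < n" and k1: "1 \<le> k + 1" "k + 1 < n" using k by auto
  have "slope_left (x (k + 1)) \<in> I \<and> slope_right (x (k + 1)) \<in> I"
  proof (cases rule: cell_cases[OF k0, case_names flat kink])
    case flat
    note left = flat_cell(2)[OF k0 flat]
    show ?thesis
    proof (cases rule: cell_cases[OF k1, case_names flat kink])
      case flat
      then show ?thesis using left flat_cell(1)[OF k1 flat] unfolding I_def by simp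
    next
      case (kink q)
      then show ?thesis using left kink_cell(1)[OF k1 kink(1-3)] unfolding I_def by simp
    qed
  next
    case (kink q1)
    note q1 = kink
    note cell1 = kink_cell[OF k0 q1(1-3)]
    show ?thesis
    proof (cases rule: cell_cases[OF k1, case_names flat kink])
      case flat
      then show ?thesis using cell1(2) flat_cell(1)[OF k1 flat] unfolding I_def by simp
    next
      case (kink q2)
      note q2 = kink
      note cell2 = kink_cell[OF k1 q2(1-3)]
      define s where "s = slope_left (x (k + 1))"
      define C1 C2 where "C1 = mass (\<lambda>j. p j = q1)" and "C2 = mass (\<lambda>j. p j = q2)"
      define L0 L1 where "L0 = x (k + 1) - x k" and "L1 = x (k + 2) - x (k + 1)"
      have left_jump: "(s - slope x y k) * L0 = C1 * (q1 - x k)"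
        using cell1(3,5) unfolding s_def C1_def L0_def by (simp add: algebra_simps)
      have right_jump: "(slope x y (k + 1) - s) * L1 = C2 * (x (k + 2) - q2)"
        using cell2(1,5) unfolding s_def C2_def L1_def by (simp add: algebra_simps)
      have "((s - slope x y k) * (slope x y (k + 1) - s)) * (L0 * L1)
          = ((s - slope x y k) * L0) * ((slope x y (k + 1) - s) * L1)"
        by (simp add: ac_simps)
      also have "\<dots> = (C1 * C2) * ((q1 - x k) * (x (k + 2) - q2))"
        unfolding left_jump right_jump by (simp add: ac_simps)
      finally have "((s - slope x y k) * (slope x y (k + 1) - s)) * (L0 * L1)
          = (C1 * C2) * ((q1 - x k) * (x (k + 2) - q2))" .
      moreover have "0 \<le> C1 * C2"
        unfolding C1_def C2_def using adjacent_kinks_same_sign[OF k q1(1-3)] q2(1-3) by simp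
      moreover have "0 < L0 * L1" "0 < (q1 - x k) * (x (k + 2) - q2)"
        unfolding L0_def L1_def using x_less[of k] x_less[of "k + 1"] k q1 q2 by auto
      ultimately have "0 \<le> (s - slope x y k) * (slope x y (k + 1) - s)"
        by (metis mult_nonneg_nonneg less_imp_le zero_le_mult_iff not_le)
      then show ?thesis using cell2(1) unfolding s_def I_def by (auto simp: zero_le_mult_iff)
    qed
  qed
  then show "slope_left (x (k + 1)) \<in> I" "slope_right (x (k + 1)) \<in> I" by auto
qed

lemma cell_one_kink_form:
  assumes k: "1 \<le> k" "k < n"
  obtains a C q where "x k < q" "q < x (k + 1)"
    and "a = slope_right (x k)" "a + C = slope_left (x (k + 1))"
    and "slope x y k * (x (k + 1) - x k) = a * (x (k + 1) - x k) + C * (x (k + 1) - q)"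
    and "\<And>t. x k \<le> t \<Longrightarrow> t \<le> x (k + 1) \<Longrightarrow> net t = y k + a * (t - x k) + C * relu (t - q)"
proof (cases rule: cell_cases[OF k, case_names flat kink])
  case flat
  have "x k < x (k + 1)" using x_less k by simp
  then show thesis
    using flat_cell[OF k flat] unfolding gline_def
    by (intro that[of "(x k + x (k + 1)) / 2" "slope x y k" 0]) simp_all
next
  case (kink q)
  note cell = kink_cell[OF k kink(1-3)]
  show thesis
    by (rule that[OF kink(1,2) refl cell(3)[symmetric] cell(5) cell(4)])
qed

lemma net_on_inner_cell:
  assumes i: "2 \<le> i" "i + 2 \<le> n" and t: "x i \<le> t" "t \<le> x (i + 1)"
  shows "curv n x y i = 1 \<Longrightarrow> curv n x y (i + 1) = 1 \<Longrightarrow>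
           max (gline x y (i - 1) t) (gline x y (i + 1) t) \<le> net t \<and> net t \<le> gline x y i t"
    and "curv n x y i = - 1 \<Longrightarrow> curv n x y (i + 1) = - 1 \<Longrightarrow>
           min (gline x y (i - 1) t) (gline x y (i + 1) t) \<ge> net t \<and> net t \<ge> gline x y i t"
    and "curv n x y i = 0 \<or> curv n x y (i + 1) = 0 \<or> curv n x y i \<noteq> curv n x y (i + 1) \<Longrightarrow>
           net t = gline x y i t"
proof -
  define d0 d1 d2 where "d0 = slope x y (i - 1)" and "d1 = slope x y i" and "d2 = slope x y (i + 1)"
  have curv: "curv n x y i = (if d0 < d1 then 1 else if d0 = d1 then 0 else - 1)"
    "curv n x y (i + 1) = (if d1 < d2 then 1 else if d1 = d2 then 0 else - 1)"
    using curv_inner[of i n x y] curv_inner[of "i + 1" n x y] i unfolding d0_def d1_def d2_def by simp_all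
  define k where "k = i - 1"
  have k: "i = k + 1" "1 \<le> k" "k + 2 \<le> n" using i unfolding k_def by auto
  have i1: "1 \<le> i" "i < n" using i by auto
  have x_i: "x i < x (i + 1)" using x_less i1 by simp
  obtain a C q where q: "x i < q" "q < x (i + 1)"
    and slopes: "a = slope_right (x i)" "a + C = slope_left (x (i + 1))"
    and secant: "d1 * (x (i + 1) - x i) = a * (x (i + 1) - x i) + C * (x (i + 1) - q)"
    and shape: "net t = y i + a * (t - x i) + C * relu (t - q)"
    using cell_one_kink_form[OF i1] t unfolding d1_def by metis
  have "a \<in> {min d0 d1..max d0 d1}"
    using one_sided_slopes_between(2)[of k] k slopes unfolding d0_def d1_def by simp
  moreover have "a + C \<in> {min d1 d2..max d1 d2}"
    using one_sided_slopes_between(1)[of i] i slopes unfolding d1_def d2_def by simp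
  moreover have "gline x y (i - 1) t = y i + d0 * (t - x i)"
    using x_less[of k] k unfolding gline_def slope_def d0_def by (simp add: field_simps)
  moreover have "gline x y i t = y i + d1 * (t - x i)"
    unfolding gline_def d1_def ..
  moreover have "gline x y (i + 1) t = y i + (d1 * (x (i + 1) - x i) + d2 * (t - x (i + 1)))"
    using x_i unfolding gline_def slope_def d1_def d2_def by (simp add: field_simps)
  ultimately have convex: "d0 < d1 \<Longrightarrow> d1 < d2 \<Longrightarrow>
           max (gline x y (i - 1) t) (gline x y (i + 1) t) \<le> net t \<and> net t \<le> gline x y i t"
    and concave: "d1 < d0 \<Longrightarrow> d2 < d1 \<Longrightarrow>
           min (gline x y (i - 1) t) (gline x y (i + 1) t) \<ge> net t \<and> net t \<ge> gline x y i t"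
    and affine: "\<not> (d0 < d1 \<and> d1 < d2) \<Longrightarrow> \<not> (d1 < d0 \<and> d2 < d1) \<Longrightarrow> net t = gline x y i t"
    using one_kink_between_secants[OF q t secant] unfolding shape by auto
  show "max (gline x y (i - 1) t) (gline x y (i + 1) t) \<le> net t \<and> net t \<le> gline x y i t"
    if "curv n x y i = 1" "curv n x y (i + 1) = 1"
    using convex that unfolding curv by (simp split: if_splits)
  show "min (gline x y (i - 1) t) (gline x y (i + 1) t) \<ge> net t \<and> net t \<ge> gline x y i t"
    if "curv n x y i = - 1" "curv n x y (i + 1) = - 1"
    using concave that unfolding curv by (simp split: if_splits)
  show "net t = gline x y i t"
    if "curv n x y i = 0 \<or> curv n x y (i + 1) = 0 \<or> curv n x y i \<noteq> curv n x y (i + 1)"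
    using affine that unfolding curv by (auto split: if_splits)
qed

lemma no_kinks_before_second_point:
  assumes j: "j < m" "p j < x 2"
  shows "c j = 0"
proof -
  have x12: "x 1 < x 2" using x_less[of 1, unfolded one_add_one] two_le_n by simp
  define P where "P j \<longleftrightarrow> p j < x 2" for j
  define Cm where "Cm = integral P (\<lambda>z. relu (z - x 1)) / (x 2 - x 1)"
  have integral: "integral P (\<lambda>z. relu (z - x 1)) = Cm * relu (x 2 - x 1)"
    unfolding Cm_def using x12 by (simp add: relu_def)
  have "cost P \<le> \<bar>Cm\<bar> * kink_weight (x 2) + \<bar>0\<bar> * kink_weight (x 2)"
  proof (rule exchange[where \<alpha> = "Cm * x 2 - moment P" and \<beta> = "mass P - Cm"], intro ballI)
    fix i assume i: "i \<in> {1..n}"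
    show "subnet P (x i) = Cm * x 2 - moment P + (mass P - Cm) * x i + Cm * relu (x i - x 2) + 0 * relu (x i - x 2)"
    proof (cases "i = 1")
      case True
      have "subnet P (x 1) = integral P (\<lambda>z. 1 * relu (z - x 1) + (- 1) * (z - x 1))"
        unfolding subnet_def by (rule integral_cong) (simp add: relu_def)
      also have "\<dots> = Cm * (x 2 - x 1) + x 1 * mass P - moment P"
        unfolding integral_linear integral x12 using x12 integral_affine[of P "- x 1" 1]
        by (simp add: relu_def)
      finally show ?thesis using True x12 by (simp add: relu_def algebra_simps)
    next
      case False
      with i have "x 2 \<le> x i" using x_mono[of 2 i] by auto
      then show ?thesis unfolding P_def by (subst subnet_eq_affine) (auto simp: relu_def algebra_simps)
    qed
  qed
  then have cost: "cost P \<le> \<bar>Cm\<bar> * kink_weight (x 2)" by simp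
  have bound: "kink_weight (x 2) * \<bar>relu (z - x 1)\<bar> < relu (x 2 - x 1) * kink_weight z" if "z < x 2" for z
  proof (cases "z \<le> x 1")
    case True
    then show ?thesis using x12 kink_weight_pos[of z] by (simp add: relu_def)
  next
    case False
    then show ?thesis
      using kink_weight_chord_less[of "x 1" z "x 2"] x1_nonneg x12 that by (simp add: relu_def mult.commute)
  qed
  have "\<forall>j<m. P j \<longrightarrow> kink_weight (x 2) * \<bar>relu (p j - x 1)\<bar> \<le> relu (x 2 - x 1) * kink_weight (p j)"
    using bound unfolding P_def by (auto intro: less_imp_le)
  moreover have "0 < relu (x 2 - x 1)" using x12 by (simp add: relu_def)
  ultimately show ?thesis
    using single_kink_certificate[OF cost integral _ _ j(1) j(2)[folded P_def] bound[OF j(2)]] by blast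
qed

lemma net_on_first_cell:
  assumes t: "t \<le> x 2"
  shows "net t = gline x y 1 t"
proof -
  have x12: "x 1 < x 2" using x_less[of 1, unfolded one_add_one] two_le_n by simp
  have linear: "net s = A + B * s" if "s \<le> x 2" for s
  proof -
    have "subnet (\<lambda>_. True) s = integral (\<lambda>_. False) (\<lambda>_. 0)"
      unfolding subnet_def
    proof (rule integral_cong_pred)
      fix j assume j: "j < m" "c j \<noteq> 0"
      have "\<not> p j < x 2" using no_kinks_before_second_point[OF j(1)] j(2) by blast
      with that show "(if True then relu (s - p j) else 0) = (if False then 0 else 0)"
        by (simp add: relu_def)
    qed
    then show ?thesis unfolding net_def by (simp add: integral_const)
  qed
  have "y 1 = A + B * x 1" "y 2 = A + B * x 2"
    using linear[of "x 1"] linear[of "x 2"] net_data[of 1] net_data[of 2] x12 two_le_n by auto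
  then have "slope x y 1 = B"
    unfolding slope_def one_add_one using x12 by (simp add: field_simps)
  then show ?thesis
    unfolding gline_def using linear[OF t] \<open>y 1 = A + B * x 1\<close> by (simp add: algebra_simps)
qed

lemma no_kinks_after_penultimate_point:
  assumes j: "j < m" "x (n - 1) < p j"
  shows "c j = 0"
proof -
  define N where "N = n - 1"
  have N: "1 \<le> N" "N < n" "N + 1 = n" unfolding N_def using two_le_n by auto
  have xN: "x N < x n" using x_less[OF N(1,2)] N(3) by simp
  define P where "P j \<longleftrightarrow> x N < p j" for j
  define Cm where "Cm = subnet P (x n) / (x n - x N)"
  have integral: "integral P (\<lambda>z. relu (x n - z)) = Cm * relu (x n - x N)"
    unfolding Cm_def subnet_def using xN by (simp add: relu_def)
  have "cost P \<le> \<bar>Cm\<bar> * kink_weight (x N) + \<bar>0\<bar> * kink_weight (x N)"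
  proof (rule exchange[where \<alpha> = 0 and \<beta> = 0], intro ballI)
    fix i assume i: "i \<in> {1..n}"
    show "subnet P (x i) = 0 + 0 * x i + Cm * relu (x i - x N) + 0 * relu (x i - x N)"
    proof (cases "i = n")
      case True
      then show ?thesis using integral xN unfolding subnet_def by (simp add: relu_def)
    next
      case False
      with i N have "x i \<le> x N" using x_mono[of i N] by auto
      then show ?thesis unfolding P_def by (subst subnet_eq_0) (auto simp: relu_def)
    qed
  qed
  then have cost: "cost P \<le> \<bar>Cm\<bar> * kink_weight (x N)" by simp
  have bound: "kink_weight (x N) * \<bar>relu (x n - z)\<bar> < relu (x n - x N) * kink_weight z" if "x N < z" for z
  proof (cases "x n \<le> z")
    case True
    then show ?thesis using xN kink_weight_pos[of z] by (simp add: relu_def)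
  next
    case False
    have "kink_weight (x N) * (x n - z) \<le> kink_weight z * (x n - z)"
      using kink_weight_mono[of "x N" z] x_nonneg[OF N(1) less_imp_le[OF N(2)]] that False
      by (simp add: mult_right_mono)
    also have "\<dots> < kink_weight z * (x n - x N)"
      using kink_weight_pos[of z] that by simp
    finally show ?thesis using False xN by (simp add: relu_def mult.commute)
  qed
  have "\<forall>j<m. P j \<longrightarrow> kink_weight (x N) * \<bar>relu (x n - p j)\<bar> \<le> relu (x n - x N) * kink_weight (p j)"
    using bound unfolding P_def by (auto intro: less_imp_le)
  moreover have "0 < relu (x n - x N)" using xN by (simp add: relu_def)
  moreover have "x N < p j" using j(2) unfolding N_def .
  ultimately show ?thesis
    using single_kink_certificate[OF cost integral _ _ j(1)] bound unfolding P_def by blast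
qed

lemma net_on_last_cell:
  assumes t: "x (n - 1) \<le> t"
  shows "net t = gline x y (n - 1) t"
proof -
  define N where "N = n - 1"
  have N: "1 \<le> N" "N < n" "N + 1 = n" unfolding N_def using two_le_n by auto
  have xN: "x N < x n" using x_less[OF N(1,2)] N(3) by simp
  have linear: "net s = y N + slope_right (x N) * (s - x N)" if "x N \<le> s" for s
  proof -
    have "subnet (\<lambda>j. x N < p j) s = integral (\<lambda>_. False) (\<lambda>_. 0)"
      unfolding subnet_def
    proof (rule integral_cong_pred)
      fix j assume j: "j < m" "c j \<noteq> 0"
      have "\<not> x N < p j" using no_kinks_after_penultimate_point[OF j(1)] j(2) unfolding N_def by blast
      then show "(if x N < p j then relu (s - p j) else 0) = (if False then 0 else 0)" by simp
    qed
    then show ?thesis using net_shift[OF that] net_data[OF N(1) less_imp_le[OF N(2)]] by (simp add: integral_const)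
  qed
  have "y n = y N + slope_right (x N) * (x n - x N)"
    using linear[of "x n"] net_data[of n] xN two_le_n by simp
  then have "slope x y N = slope_right (x N)"
    unfolding slope_def N(3) using xN by (simp add: field_simps)
  then show ?thesis
    unfolding gline_def N_def[symmetric] using linear t unfolding N_def by simp
qed

end

theorem lemma2:
  fixes n :: nat and x y :: "nat \<Rightarrow> real" and f :: "real \<Rightarrow> real"
  assumes "n \<ge> 2"
    and "0 \<le> x 1"
    and "\<forall>i. 1 \<le> i \<and> i < n \<longrightarrow> x i < x (i+1)"
    and "min_norm_interpolant n x y f"
  shows "(\<forall>t. t < x 2 \<longrightarrow> f t = gline x y 1 t)
    \<and> (\<forall>t. x (n-1) \<le> t \<longrightarrow> f t = gline x y (n-1) t)
    \<and> (\<forall>i\<in>{2..n-2}. \<forall>t. x i \<le> t \<and> t < x (i+1) \<longrightarrow>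
          ((curv n x y i = 1 \<and> curv n x y (i+1) = 1 \<longrightarrow>
              max (gline x y (i-1) t) (gline x y (i+1) t) \<le> f t \<and> f t \<le> gline x y i t)
         \<and> (curv n x y i = -1 \<and> curv n x y (i+1) = -1 \<longrightarrow>
              min (gline x y (i-1) t) (gline x y (i+1) t) \<ge> f t \<and> f t \<ge> gline x y i t)
         \<and> (curv n x y i = 0 \<or> curv n x y (i+1) = 0 \<or> curv n x y i \<noteq> curv n x y (i+1) \<longrightarrow>
              f t = gline x y i t)))"
proof -
  obtain A B m c p where f: "\<And>t. f t = A + B * t + kink_network.subnet m c p (\<lambda>_. True) t"
    and exchange: "\<And>P \<alpha> \<beta> e1 r1 e2 r2.
           \<forall>r\<in>{1..n}. kink_network.subnet m c p P (x r)
                        = \<alpha> + \<beta> * x r + e1 * relu (x r - r1) + e2 * relu (x r - r2) \<Longrightarrow>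
           kink_network.cost m c p P \<le> \<bar>e1\<bar> * kink_weight r1 + \<bar>e2\<bar> * kink_weight r2"
    using min_norm_interpolant_kink_form[OF assms(4)] by blast
  interpret optimal_kink_network m c p n x y A B
  proof
    show "x i < x (i + 1)" if "1 \<le> i" "i < n" for i using assms(3) that by blast
    show "A + B * x r + kink_network.subnet m c p (\<lambda>_. True) (x r) = y r" if "1 \<le> r" "r \<le> n" for r
      using min_norm_interpolant_interpolates[OF assms(4)] f that by simp
  qed (use assms exchange in auto)
  have "f = net" unfolding net_def using f by auto
  then show ?thesis
    using net_on_first_cell net_on_last_cell net_on_inner_cell by auto
qed

end
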